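(* Let $m_0$ be a positive integer with the covering property. There exists $\zeta_3>0$, not depending on $d$, such that if $0\le\zeta<\zeta_3$, then there is a random vector $\mathbf x_\infty\in\mathbb R^d$ such that: (1) there exist positive constants $C_1,\Lambda_1$ satisfying $\mathbb E\,\mathcal D(\mathfrak x^l_n)\le C_1\mathbb E\,\mathcal D(\mathfrak x^l_0)e^{-\Lambda_1 n}$ for all $n\ge0$, $1\le l\le d$, and moreover $$\mathbb E\|\mathbf x^i_n-\mathbf x_\infty\|_1\le\frac{d(\gamma+\sqrt N\zeta)C_1\max_{1\le l\le d}\mathbb E\,\mathcal D(\mathfrak x^l_0)}{1-e^{-\Lambda_1}}\,e^{-\Lambda_1 n},\qquad n\ge0,\ i\in\mathcal N;$$ (2) there exist a positive constant $\Lambda_2$ and an almost surely finite positive random variable $C_3$ such that almost surely $\|\mathbf x^i_n-\mathbf x_\infty\|_1\le C_3e^{-\Lambda_2 n}$ for all $n\ge0$ and $i\in\mathcal N$.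
   Context: Setting (random batch CBO). Fix integers $N\ge2$, $d\ge1$, batch size $P\ge2$, drift $\gamma\in(0,1)$, noise level $\zeta\ge0$; $\mathcal N=\{1,\dots,N\}$. Weight functions $\omega_{S,j}:(\mathbb R^d)^N\to[0,\infty)$ for nonempty $S\subseteq\mathcal N$, $j\in\mathcal N$, with $\sum_{j\in S}\omega_{S,j}=1$ and $\omega_{S,j}=0$ for $j\notin S$. $\mathcal A$ is the set of partitions of $\mathcal N$ into $\lceil N/P\rceil$ batches, all of size $P$ except possibly one of size at most $P$; $(\mathcal B^n)_{n\ge0}$ i.i.d. uniform on $\mathcal A$; $[i]_n$ is the batch of $\mathcal B^n$ containing $i$. Noise arrays $(\eta^{i,l}_n)_{i,l}$ are i.i.d. in $n$ with $\mathbb E\eta^{i,l}_n=0$, $\mathbb E|\eta^{i,l}_n|^2\le\zeta^2$; initial data $X_0$ (deterministic or random), batches, and noises are mutually independent. The dynamics is $\mathbf x^i_{n+1}=\mathbf x^i_n-\gamma(\mathbf x^i_n-\bar{\mathbf x}^{[i]_n,*}_n)-\sum_{l=1}^d(x^{i,l}_n-\bar x^{[i]_n,*,l}_n)\eta^{i,l}_n\mathbf e_l$ with $\bar{\mathbf x}^{S,*}_n=\sum_j\omega_{S,j}(X_n)\mathbf x^j_n$, $X_n=(\mathbf x^1_n,\dots,\mathbf x^N_n)$. Let $\mathfrak x^l_n:=(x^{1,l}_n,\dots,x^{N,l}_n)^\top$ and $\mathcal D(\mathbf z):=\max_iz_i-\min_iz_i$. A positive integer $m_0$ has the covering property if there exist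 partitions $\mathcal P^1,\dots,\mathcal P^{m_0}\in\mathcal A$ such that every pair $i,j\in\mathcal N$ lies in a common block of some $\mathcal P^k$. *)

theory Defs
  imports "HOL-Probability.Probability"
begin

text \<open>Particle index set {1..N}, coordinate index set {1..d}.
  A configuration X = (x^1,...,x^N) in (R^d)^N is an extensional function
  on {1..N} x {1..d}: X (i,l) = x^{i,l}.\<close>

type_synonym config = "nat \<times> nat \<Rightarrow> real"

definition config_space :: "nat \<Rightarrow> nat \<Rightarrow> config measure" where
  "config_space N d = PiM ({1..N} \<times> {1..d}) (\<lambda>_. borel)"

definition admissible :: "nat \<Rightarrow> nat \<Rightarrow> nat set set set" where
  "admissible N P = {B. partition_on {1..N} B
      \<and> card B = nat \<lceil>real N / real P\<rceil>
      \<and> (\<forall>S\<in>B. card S \<le> P)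
      \<and> card {S\<in>B. card S \<noteq> P} \<le> 1}"

definition covering_property :: "nat \<Rightarrow> nat \<Rightarrow> nat \<Rightarrow> bool" where
  "covering_property N P m0 = (\<exists>Pt :: nat \<Rightarrow> nat set set.
      (\<forall>k\<in>{1..m0}. Pt k \<in> admissible N P) \<and>
      (\<forall>i\<in>{1..N}. \<forall>j\<in>{1..N}. \<exists>k\<in>{1..m0}. \<exists>S\<in>Pt k. i \<in> S \<and> j \<in> S))"

definition batch_of :: "nat set set \<Rightarrow> nat \<Rightarrow> nat set" where
  "batch_of B i = (THE S. S \<in> B \<and> i \<in> S)"

definition wavg :: "(nat set \<Rightarrow> nat \<Rightarrow> config \<Rightarrow> real) \<Rightarrow> nat set \<Rightarrow> config \<Rightarrow> nat \<Rightarrow> real" where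
  "wavg \<omega> S X l = (\<Sum>j\<in>S. \<omega> S j X * X (j, l))"

definition cbo_step :: "nat \<Rightarrow> nat \<Rightarrow> real \<Rightarrow> (nat set \<Rightarrow> nat \<Rightarrow> config \<Rightarrow> real)
     \<Rightarrow> nat set set \<Rightarrow> config \<Rightarrow> config \<Rightarrow> config" where
  "cbo_step N d \<gamma> \<omega> B \<eta> X = (\<lambda>p. if fst p \<in> {1..N} \<and> snd p \<in> {1..d} then
       X p - \<gamma> * (X p - wavg \<omega> (batch_of B (fst p)) X (snd p))
           - (X p - wavg \<omega> (batch_of B (fst p)) X (snd p)) * \<eta> p
     else undefined)"

primrec cbo_traj :: "nat \<Rightarrow> nat \<Rightarrow> real \<Rightarrow> (nat set \<Rightarrow> nat \<Rightarrow> config \<Rightarrow> real)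
     \<Rightarrow> config \<Rightarrow> (nat \<Rightarrow> nat set set) \<Rightarrow> (nat \<Rightarrow> config) \<Rightarrow> nat \<Rightarrow> config" where
  "cbo_traj N d \<gamma> \<omega> X0 B \<eta> 0 = X0"
| "cbo_traj N d \<gamma> \<omega> X0 B \<eta> (Suc n) = cbo_step N d \<gamma> \<omega> (B n) (\<eta> n) (cbo_traj N d \<gamma> \<omega> X0 B \<eta> n)"

definition cbo_path :: "nat \<Rightarrow> nat \<Rightarrow> real \<Rightarrow> (nat set \<Rightarrow> nat \<Rightarrow> config \<Rightarrow> real)
     \<Rightarrow> ('a \<Rightarrow> config) \<Rightarrow> (nat \<Rightarrow> 'a \<Rightarrow> nat set set) \<Rightarrow> (nat \<Rightarrow> 'a \<Rightarrow> config)
     \<Rightarrow> 'a \<Rightarrow> nat \<Rightarrow> config" where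
  "cbo_path N d \<gamma> \<omega> X0 B \<eta> w n = cbo_traj N d \<gamma> \<omega> (X0 w) (\<lambda>k. B k w) (\<lambda>k. \<eta> k w) n"

definition diam_coord :: "nat \<Rightarrow> config \<Rightarrow> nat \<Rightarrow> real" where
  "diam_coord N X l = (MAX i\<in>{1..N}. X (i, l)) - (MIN i\<in>{1..N}. X (i, l))"

definition dist1 :: "nat \<Rightarrow> config \<Rightarrow> nat \<Rightarrow> (nat \<Rightarrow> real) \<Rightarrow> real" where
  "dist1 d X i y = (\<Sum>l\<in>{1..d}. \<bar>X (i, l) - y l\<bar>)"

datatype src = SrcX0 | SrcB nat | SrcEta nat

definition rbcbo_setting ::
  "nat \<Rightarrow> nat \<Rightarrow> nat \<Rightarrow> real \<Rightarrow> 'a measure \<Rightarrow> (nat set \<Rightarrow> nat \<Rightarrow> config \<Rightarrow> real)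
   \<Rightarrow> ('a \<Rightarrow> config) \<Rightarrow> (nat \<Rightarrow> 'a \<Rightarrow> nat set set) \<Rightarrow> (nat \<Rightarrow> 'a \<Rightarrow> config) \<Rightarrow> bool" where
  "rbcbo_setting N d P \<zeta> M \<omega> X0 B \<eta> \<longleftrightarrow>
     prob_space M
   \<comment> \<open>weights\<close>
   \<and> (\<forall>S. S \<noteq> {} \<and> S \<subseteq> {1..N} \<longrightarrow>
        (\<forall>j\<in>{1..N}. \<omega> S j \<in> borel_measurable (config_space N d)) \<and>
        (\<forall>X\<in>space (config_space N d).
            (\<forall>j\<in>{1..N}. \<omega> S j X \<ge> 0) \<and> (\<Sum>j\<in>S. \<omega> S j X) = 1
          \<and> (\<forall>j\<in>{1..N} - S. \<omega> S j X = 0)))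
   \<comment> \<open>initial data\<close>
   \<and> X0 \<in> measurable M (config_space N d)
   \<comment> \<open>batches: uniform on A\<close>
   \<and> (\<forall>n. B n \<in> measurable M (count_space (admissible N P)))
   \<and> (\<forall>n. \<forall>Q\<in>admissible N P.
        measure M {w\<in>space M. B n w = Q} = 1 / real (card (admissible N P)))
   \<comment> \<open>noise arrays: identically distributed, mean zero, second moment \<le> zeta^2\<close>
   \<and> (\<forall>n. \<eta> n \<in> measurable M (config_space N d))
   \<and> (\<forall>n. distr M (config_space N d) (\<eta> n) = distr M (config_space N d) (\<eta> 0))
   \<and> (\<forall>n. \<forall>i\<in>{1..N}. \<forall>l\<in>{1..d}.
        integrable M (\<lambda>w. \<eta> n w (i, l)) \<and> (\<integral>w. \<eta> n w (i, l) \<partial>M) = 0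
      \<and> (\<integral>\<^sup>+ w. ennreal ((\<eta> n w (i, l))\<^sup>2) \<partial>M) \<le> ennreal (\<zeta>\<^sup>2))
   \<comment> \<open>mutual independence of X0, B^0, B^1, ..., eta_0, eta_1, ...\<close>
   \<and> prob_space.indep_sets M (\<lambda>k. case k of
          SrcX0 \<Rightarrow> {X0 -` A \<inter> space M | A. A \<in> sets (config_space N d)}
        | SrcB n \<Rightarrow> {B n -` A \<inter> space M | A. A \<in> sets (count_space (admissible N P))}
        | SrcEta n \<Rightarrow> {\<eta> n -` A \<inter> space M | A. A \<in> sets (config_space N d)}) UNIV"

end

theory Submission
  imports Defs
begin

(* In every coordinate the particles perform a perturbed averaging: each one moves a fraction
   gamma towards a convex combination of the current values, plus a noise term bounded by
   sum_i |eta| times the current diameter D. Pathwise, one step multiplies D by at most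
   1 + 2 sum_i |eta|, and a window of m0 steps whose batches follow the covering partitions
   contracts D by 1 - gamma (1 - gamma)^m0 up to noise terms. Such a window has probability
   |A|^(-m0), and batches and noise are independent of the past, so for small zeta the expected
   diameter contracts by a fixed factor rho < 1 per window: E D decays exponentially. The
   increments of each particle are bounded by (gamma + sum_i |eta|) D, so their expectations are
   geometrically summable; hence all particles converge to a common limit, in mean at the same
   rate, and almost surely at half the rate, because the series sum_n e^(Lambda n / 2) D_n (plus the
   remaining increments) has finite expectation after weighting by 1 / (1 + D_0). *)

lemma admissible_partition_on: "Q \<in> admissible N P \<Longrightarrow> partition_on {1..N} Q"
  by (simp add: admissible_def)

lemma finite_admissible: "finite (admissible N P)"
  by (rule finite_subset[OF _ finitely_many_partition_on[of "{1..N}"]])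
     (auto simp: admissible_def)

lemma batch_of_eq:
  assumes Q: "Q \<in> admissible N P" and "S \<in> Q" "i \<in> S"
  shows "batch_of Q i = S"
  unfolding batch_of_def
proof (rule the_equality)
  fix T assume "T \<in> Q \<and> i \<in> T"
  then show "T = S"
    using assms disjointD[OF partition_onD2[OF admissible_partition_on[OF Q]]] by blast
qed (use assms in blast)

lemma batch_of_mem:
  assumes Q: "Q \<in> admissible N P" and i: "i \<in> {1..N}"
  shows "batch_of Q i \<in> Q" and "i \<in> batch_of Q i"
    and "batch_of Q i \<subseteq> {1..N}" and "batch_of Q i \<noteq> {}"
proof -
  have po: "partition_on {1..N} Q" using admissible_partition_on[OF Q] .
  obtain S where S: "S \<in> Q" "i \<in> S" using partition_onD1[OF po] i by blast
  show "batch_of Q i \<in> Q" "i \<in> batch_of Q i" "batch_of Q i \<noteq> {}"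
    using batch_of_eq[OF Q S] S by auto
  show "batch_of Q i \<subseteq> {1..N}" using batch_of_eq[OF Q S] S partition_onD1[OF po] by blast
qed

section \<open>A perturbed averaging recursion\<close>

text \<open>A single coordinate of the dynamics along one sample path: \<open>c k i\<close> is the batch average
  seen by particle \<open>i\<close> and \<open>r k i\<close> the noise term.\<close>

locale perturbed_averaging =
  fixes I :: "nat set" and \<gamma> :: real and a c r :: "nat \<Rightarrow> nat \<Rightarrow> real" and \<epsilon> :: "nat \<Rightarrow> real"
  assumes finite_I: "finite I" and I_ne: "I \<noteq> {}" and gamma_pos: "0 < \<gamma>" and gamma_lt1: "\<gamma> < 1"
    and step: "\<And>k i. i \<in> I \<Longrightarrow> a (Suc k) i = (1 - \<gamma>) * a k i + \<gamma> * c k i + r k i"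
    and target_in_hull: "\<And>k i. i \<in> I \<Longrightarrow> Min (a k ` I) \<le> c k i \<and> c k i \<le> Max (a k ` I)"
    and perturbation_le: "\<And>k i. i \<in> I \<Longrightarrow> \<bar>r k i\<bar> \<le> \<epsilon> k"
begin

definition "total_err k = (\<Sum>s<k. \<epsilon> s)"
definition "upper = Max (a 0 ` I)"
definition "lower = Min (a 0 ` I)"

lemma Max_attained: "\<exists>i\<in>I. a k i = Max (a k ` I)"
  using Max_in[of "a k ` I"] finite_I I_ne by (metis finite_imageI image_iff image_is_empty)

lemma Min_attained: "\<exists>i\<in>I. a k i = Min (a k ` I)"
  using Min_in[of "a k ` I"] finite_I I_ne by (metis finite_imageI image_iff image_is_empty)

lemma err_nonneg: "0 \<le> \<epsilon> k"
  using I_ne perturbation_le[of _ k] by fastforce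

lemma total_err_nonneg: "0 \<le> total_err k"
  unfolding total_err_def by (simp add: sum_nonneg err_nonneg)

lemma total_err_Suc: "total_err (Suc k) = total_err k + \<epsilon> k"
  unfolding total_err_def by simp

lemma lower_le_upper: "lower \<le> upper"
proof -
  obtain i where "i \<in> I" using I_ne by blast
  then show ?thesis using finite_I unfolding lower_def upper_def by (meson Min_le Max_ge finite_imageI imageI order_trans)
qed

lemma hull_envelope:
  assumes "\<And>i. i \<in> I \<Longrightarrow> lo \<le> a k i \<and> a k i \<le> hi" and "i \<in> I"
  shows "lo \<le> c k i \<and> c k i \<le> hi"
proof -
  obtain i0 where "i0 \<in> I" "a k i0 = Max (a k ` I)" using Max_attained by blast
  moreover obtain i1 where "i1 \<in> I" "a k i1 = Min (a k ` I)" using Min_attained by blast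
  ultimately show ?thesis using assms target_in_hull[OF assms(2), of k] by force
qed

lemma envelope: "i \<in> I \<Longrightarrow> lower - total_err k \<le> a k i \<and> a k i \<le> upper + total_err k"
proof (induction k arbitrary: i)
  case 0
  then show ?case using finite_I by (auto simp: total_err_def lower_def upper_def)
next
  case (Suc k)
  have c: "lower - total_err k \<le> c k i \<and> c k i \<le> upper + total_err k"
    by (rule hull_envelope[OF Suc.IH Suc.prems])
  have "(1 - \<gamma>) * a k i + \<gamma> * c k i \<le> (1 - \<gamma>) * (upper + total_err k) + \<gamma> * (upper + total_err k)"
    using Suc.IH[OF Suc.prems] c gamma_pos gamma_lt1 by (intro add_mono mult_left_mono) auto
  moreover have "(1 - \<gamma>) * (lower - total_err k) + \<gamma> * (lower - total_err k) \<le> (1 - \<gamma>) * a k i + \<gamma> * c k i"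
    using Suc.IH[OF Suc.prems] c gamma_pos gamma_lt1 by (intro add_mono mult_left_mono) auto
  ultimately show ?case
    using step[OF Suc.prems, of k] perturbation_le[OF Suc.prems, of k] total_err_Suc[of k]
    by (auto simp: algebra_simps)
qed

lemma target_envelope: "i \<in> I \<Longrightarrow> lower - total_err k \<le> c k i \<and> c k i \<le> upper + total_err k"
  by (rule hull_envelope[OF envelope])

lemma diam_le: "Max (a k ` I) - Min (a k ` I) \<le> (upper - lower) + 2 * total_err k"
proof -
  obtain i0 where "i0 \<in> I" "a k i0 = Max (a k ` I)" using Max_attained by blast
  moreover obtain i1 where "i1 \<in> I" "a k i1 = Min (a k ` I)" using Min_attained by blast
  ultimately show ?thesis using envelope[of i0 k] envelope[of i1 k] by linarith
qed

lemma gap_Suc: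
  assumes "i \<in> I" "j \<in> I"
  shows "(upper - a (Suc k) i) + (a (Suc k) j - lower)
       = (1 - \<gamma>) * ((upper - a k i) + (a k j - lower)) + \<gamma> * ((upper - c k i) + (c k j - lower))
         - r k i + r k j"
  using step[OF assms(1), of k] step[OF assms(2), of k] by (simp add: algebra_simps)

text \<open>In \<open>gap_Suc\<close> the target term equals the whole initial range at the meeting step \<open>s0\<close> and is
  at least \<open>-2 * total_err k\<close> otherwise; the fraction gained at \<open>s0\<close> then decays by \<open>1 - \<gamma>\<close> per step.\<close>

lemma gap_after_meeting:
  assumes i: "i \<in> I" and j: "j \<in> I" and meet: "c s0 i = c s0 j" and k: "Suc s0 \<le> k"
  shows "(1 - \<gamma>) ^ k * \<gamma> * (upper - lower)
           \<le> (upper - a k i) + (a k j - lower) + 2 * k * total_err k"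
  using k
proof (induction k rule: dec_induct)
  case base
  have "(1 - \<gamma>) * (- 2 * total_err s0) \<le> (1 - \<gamma>) * ((upper - a s0 i) + (a s0 j - lower))"
    using envelope[OF i, of s0] envelope[OF j, of s0] gamma_lt1 by (intro mult_left_mono) auto
  moreover have "\<gamma> * total_err s0 \<ge> 0" using gamma_pos total_err_nonneg[of s0] by simp
  moreover have "(1 - \<gamma>) ^ Suc s0 * (\<gamma> * (upper - lower)) \<le> 1 * (\<gamma> * (upper - lower))"
    using gamma_pos gamma_lt1 lower_le_upper by (intro mult_right_mono power_le_one) auto
  moreover have "2 * total_err (Suc s0) \<le> 2 * real (Suc s0) * total_err (Suc s0)"
    using total_err_nonneg[of "Suc s0"] by (simp add: mult_right_mono)
  ultimately show ?case
    using gap_Suc[OF i j, of s0] meet total_err_Suc[of s0]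
      perturbation_le[OF i, of s0] perturbation_le[OF j, of s0]
    by (simp add: algebra_simps)
next
  case (step k)
  let ?D = "upper - lower"
  have "(1 - \<gamma>) * ((1 - \<gamma>) ^ k * \<gamma> * ?D - 2 * k * total_err k)
      \<le> (1 - \<gamma>) * ((upper - a k i) + (a k j - lower))"
    using step.IH gamma_lt1 by (intro mult_left_mono) auto
  moreover have "(1 - \<gamma>) * ((1 - \<gamma>) ^ k * \<gamma> * ?D - 2 * k * total_err k)
      = (1 - \<gamma>) ^ Suc k * \<gamma> * ?D - 2 * ((1 - \<gamma>) * (k * total_err k))"
    by (simp add: algebra_simps)
  moreover have "- 2 * total_err k \<le> (upper - c k i) + (c k j - lower)"
    using target_envelope[OF i, of k] target_envelope[OF j, of k] by auto
  then have "\<gamma> * (- 2 * total_err k) \<le> \<gamma> * ((upper - c k i) + (c k j - lower))"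
    using gamma_pos by (intro mult_left_mono) auto
  moreover have "(1 - \<gamma>) * (k * total_err k) \<le> 1 * (k * total_err k)"
    using gamma_pos total_err_nonneg[of k] by (intro mult_right_mono) auto
  moreover have "k * total_err k \<le> k * total_err (Suc k)"
    using err_nonneg[of k] total_err_Suc[of k] by (intro mult_left_mono) auto
  moreover have "\<gamma> * total_err k \<le> total_err k"
    using gamma_pos gamma_lt1 total_err_nonneg[of k] by (simp add: mult_left_le_one_le)
  moreover have "2 * real (Suc k) * total_err (Suc k) = 2 * (k * total_err (Suc k)) + 2 * total_err k + 2 * \<epsilon> k"
    using total_err_Suc[of k] by (simp add: algebra_simps)
  ultimately show ?case
    using gap_Suc[OF i j, of k] perturbation_le[OF i, of k] perturbation_le[OF j, of k]
    by linarith
qed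

lemma diam_contracts:
  assumes "\<forall>i\<in>I. \<forall>j\<in>I. \<exists>s0<k. c s0 i = c s0 j"
  shows "Max (a k ` I) - Min (a k ` I) \<le> (1 - \<gamma> * (1 - \<gamma>) ^ k) * (upper - lower) + 2 * k * total_err k"
proof -
  obtain i0 where i0: "i0 \<in> I" "a k i0 = Max (a k ` I)" using Max_attained by blast
  obtain i1 where i1: "i1 \<in> I" "a k i1 = Min (a k ` I)" using Min_attained by blast
  obtain s0 where "s0 < k" "c s0 i0 = c s0 i1" using assms i0 i1 by blast
  then show ?thesis using gap_after_meeting[OF i0(1) i1(1), of s0 k] i0 i1 by (simp add: algebra_simps)
qed

end

section \<open>Independence of the sources of randomness\<close>

lemma Int_stable_vimage_sets: "Int_stable {X -` A \<inter> space M | A. A \<in> sets S}"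
proof (safe intro!: Int_stableI)
  fix A B assume "A \<in> sets S" "B \<in> sets S"
  then show "\<exists>C. (X -` A \<inter> space M) \<inter> (X -` B \<inter> space M) = X -` C \<inter> space M \<and> C \<in> sets S"
    by (intro exI[of _ "A \<inter> B"]) auto
qed

locale rbcbo = prob_space M for M :: "'a measure" +
  fixes N d P :: nat and \<gamma> \<zeta> :: real and \<omega> X0 B \<eta>
  assumes setting: "rbcbo_setting N d P \<zeta> M \<omega> X0 B \<eta>"
    and N_pos: "0 < N" and gamma_pos: "0 < \<gamma>" and gamma_lt1: "\<gamma> < 1" and zeta_nonneg: "0 \<le> \<zeta>"
begin

abbreviation "configs \<equiv> config_space N d"
abbreviation "batches \<equiv> admissible N P"

lemma one_in_particles: "1 \<in> {1..N}"
  using N_pos by simp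

lemma weight_measurable:
  "S \<noteq> {} \<Longrightarrow> S \<subseteq> {1..N} \<Longrightarrow> j \<in> {1..N} \<Longrightarrow> \<omega> S j \<in> borel_measurable configs"
  using setting unfolding rbcbo_setting_def by simp

lemma weight_convex:
  "S \<noteq> {} \<Longrightarrow> S \<subseteq> {1..N} \<Longrightarrow> X \<in> space configs \<Longrightarrow>
     (\<forall>j\<in>S. 0 \<le> \<omega> S j X) \<and> (\<Sum>j\<in>S. \<omega> S j X) = 1"
  using setting unfolding rbcbo_setting_def by (simp add: subset_iff)

lemma X0_measurable: "X0 \<in> measurable M configs"
  using setting unfolding rbcbo_setting_def by simp

lemma B_measurable: "B n \<in> measurable M (count_space batches)"
  using setting unfolding rbcbo_setting_def by simp

lemma B_uniform: "Q \<in> batches \<Longrightarrow> prob {w\<in>space M. B n w = Q} = 1 / real (card batches)"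
  using setting unfolding rbcbo_setting_def by simp

lemma eta_measurable: "\<eta> n \<in> measurable M configs"
  using setting unfolding rbcbo_setting_def by simp

lemma eta_second_moment:
  "i \<in> {1..N} \<Longrightarrow> l \<in> {1..d} \<Longrightarrow> (\<integral>\<^sup>+ w. ennreal ((\<eta> n w (i, l))\<^sup>2) \<partial>M) \<le> ennreal (\<zeta>\<^sup>2)"
  using setting unfolding rbcbo_setting_def by simp

definition source_events :: "src \<Rightarrow> 'a set set" where
  "source_events = (\<lambda>k. case k of
          SrcX0 \<Rightarrow> {X0 -` A \<inter> space M | A. A \<in> sets (config_space N d)}
        | SrcB n \<Rightarrow> {B n -` A \<inter> space M | A. A \<in> sets (count_space (admissible N P))}
        | SrcEta n \<Rightarrow> {\<eta> n -` A \<inter> space M | A. A \<in> sets (config_space N d)})"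

lemma indep_source_events: "indep_sets source_events UNIV"
  using setting unfolding rbcbo_setting_def source_events_def by (elim conjE)

lemma source_events_simps:
  "source_events SrcX0 = {X0 -` A \<inter> space M | A. A \<in> sets configs}"
  "source_events (SrcB n) = {B n -` A \<inter> space M | A. A \<in> sets (count_space batches)}"
  "source_events (SrcEta n) = {\<eta> n -` A \<inter> space M | A. A \<in> sets configs}"
  unfolding source_events_def by simp_all

lemma Int_stable_source_events: "Int_stable (source_events k)"
  by (cases k) (simp_all only: source_events_simps Int_stable_vimage_sets)

lemma source_events_sets: "source_events k \<subseteq> sets M"
  by (cases k)
     (auto simp: source_events_simps intro: measurable_sets X0_measurable B_measurable eta_measurable)

definition source_algebra :: "src set \<Rightarrow> 'a measure" where
  "source_algebra K = sigma (space M) (\<Union>k\<in>K. source_events k)"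

lemma source_events_Pow: "(\<Union>k\<in>K. source_events k) \<subseteq> Pow (space M)"
  using source_events_sets sets.sets_into_space by blast

lemma space_source_algebra [simp]: "space (source_algebra K) = space M"
  unfolding source_algebra_def using source_events_Pow by (simp add: space_measure_of_conv)

lemma sets_source_algebra: "sets (source_algebra K) = sigma_sets (space M) (\<Union>k\<in>K. source_events k)"
  unfolding source_algebra_def using source_events_Pow by (simp add: sets_measure_of)

lemma subalgebra_source_algebra: "subalgebra M (source_algebra K)"
  unfolding subalgebra_def sets_source_algebra
  using source_events_sets by (auto intro!: sets.sigma_sets_subset)

lemma measurable_source_algebra_mono:
  "K \<subseteq> L \<Longrightarrow> f \<in> measurable (source_algebra K) S \<Longrightarrow> f \<in> measurable (source_algebra L) S"
  by (erule measurable_from_subalg[rotated])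
     (auto simp: subalgebra_def sets_source_algebra intro!: sigma_sets_mono')

lemma measurable_from_source_algebra:
  "f \<in> measurable (source_algebra K) S \<Longrightarrow> f \<in> measurable M S"
  using measurable_from_subalg subalgebra_source_algebra by blast

lemma measurable_source_algebra_generator:
  assumes k: "k \<in> K" and f: "f \<in> measurable M S"
    and events: "source_events k = {f -` A \<inter> space M | A. A \<in> sets S}"
  shows "f \<in> measurable (source_algebra K) S"
proof (rule measurableI)
  show "x \<in> space (source_algebra K) \<Longrightarrow> f x \<in> space S" for x
    using f measurable_space by auto
  fix A assume "A \<in> sets S"
  then have "f -` A \<inter> space M \<in> source_events k" using events by blast
  then show "f -` A \<inter> space (source_algebra K) \<in> sets (source_algebra K)"
    unfolding sets_source_algebra using k by auto
qed

lemma X0_source_measurable: "SrcX0 \<in> K \<Longrightarrow> X0 \<in> measurable (source_algebra K) configs"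
  by (rule measurable_source_algebra_generator[OF _ X0_measurable source_events_simps(1)])

lemma B_source_measurable: "SrcB n \<in> K \<Longrightarrow> B n \<in> measurable (source_algebra K) (count_space batches)"
  by (rule measurable_source_algebra_generator[OF _ B_measurable source_events_simps(2)])

lemma eta_source_measurable: "SrcEta n \<in> K \<Longrightarrow> \<eta> n \<in> measurable (source_algebra K) configs"
  by (rule measurable_source_algebra_generator[OF _ eta_measurable source_events_simps(3)])

lemma nn_integral_mult_indep_sources:
  fixes f g :: "'a \<Rightarrow> ennreal"
  assumes KL: "K \<inter> L = {}"
    and f: "f \<in> borel_measurable (source_algebra K)" and g: "g \<in> borel_measurable (source_algebra L)"
  shows "(\<integral>\<^sup>+ w. f w * g w \<partial>M) = (\<integral>\<^sup>+ w. f w \<partial>M) * (\<integral>\<^sup>+ w. g w \<partial>M)"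
proof -
  let ?K = "case_bool K L" and ?X = "case_bool f g"
  have "disjoint_family_on ?K UNIV"
    unfolding disjoint_family_on_def using KL by (auto split: bool.split)
  then have ind: "indep_sets (\<lambda>b. sigma_sets (space M) (\<Union>k\<in>?K b. source_events k)) UNIV"
    using Int_stable_source_events
    by (intro indep_sets_collect_sigma indep_sets_mono_index[OF subset_UNIV indep_source_events]) auto
  have "indep_vars (\<lambda>_. borel) ?X UNIV"
    unfolding indep_vars_def2
  proof
    show "\<forall>b\<in>UNIV. random_variable borel (?X b)"
      using measurable_from_source_algebra f g by (auto split: bool.split)
    show "indep_sets (\<lambda>b. {?X b -` A \<inter> space M |A. A \<in> sets borel}) UNIV"
      by (rule indep_sets_mono_sets[OF ind])
         (use measurable_sets[OF f] measurable_sets[OF g] in \<open>auto simp: sets_source_algebra split: bool.split\<close>)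
  qed
  then have "(\<integral>\<^sup>+ w. (\<Prod>b\<in>UNIV. ?X b w) \<partial>M) = (\<Prod>b\<in>UNIV. \<integral>\<^sup>+ w. ?X b w \<partial>M)"
    by (intro indep_vars_nn_integral) auto
  then show ?thesis by (simp add: UNIV_bool mult.commute)
qed

end

lemma wavg_between_min_max:
  assumes w: "\<forall>j\<in>S. 0 \<le> \<omega> S j X" "(\<Sum>j\<in>S. \<omega> S j X) = 1" and S: "S \<subseteq> {1..N}"
  shows "(MIN j\<in>{1..N}. X (j, l)) \<le> wavg \<omega> S X l \<and> wavg \<omega> S X l \<le> (MAX j\<in>{1..N}. X (j, l))"
proof
  have "wavg \<omega> S X l \<le> (\<Sum>j\<in>S. \<omega> S j X * (MAX j\<in>{1..N}. X (j, l)))"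
    unfolding wavg_def using w S by (intro sum_mono mult_left_mono) auto
  then show "wavg \<omega> S X l \<le> (MAX j\<in>{1..N}. X (j, l))"
    using w by (simp add: sum_distrib_right[symmetric])
  have "(\<Sum>j\<in>S. \<omega> S j X * (MIN j\<in>{1..N}. X (j, l))) \<le> wavg \<omega> S X l"
    unfolding wavg_def using w S by (intro sum_mono mult_left_mono) auto
  then show "(MIN j\<in>{1..N}. X (j, l)) \<le> wavg \<omega> S X l"
    using w by (simp add: sum_distrib_right[symmetric])
qed

lemma cbo_step_apply:
  assumes "i \<in> {1..N}" "l \<in> {1..d}"
  shows "cbo_step N d \<gamma> \<omega> Q e X (i, l)
     = (1 - \<gamma>) * X (i, l) + \<gamma> * wavg \<omega> (batch_of Q i) X l
       - (X (i, l) - wavg \<omega> (batch_of Q i) X l) * e (i, l)"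
  using assms by (simp add: cbo_step_def algebra_simps)

lemma measurable_config_component:
  "x \<in> measurable M (config_space N d) \<Longrightarrow> p \<in> {1..N} \<times> {1..d} \<Longrightarrow> (\<lambda>w. x w p) \<in> borel_measurable M"
  unfolding config_space_def by (erule measurable_compose[OF _ measurable_component_singleton])

lemma diam_coord_measurable:
  "x \<in> measurable M (config_space N d) \<Longrightarrow> l \<in> {1..d} \<Longrightarrow> (\<lambda>w. diam_coord N (x w) l) \<in> borel_measurable M"
  unfolding diam_coord_def
  by (intro borel_measurable_diff borel_measurable_Max borel_measurable_Min finite_atLeastAtMost)
     (auto intro: measurable_config_component)

context rbcbo
begin

lemma wavg_measurable:
  assumes x: "x \<in> measurable M' configs" and S: "S \<noteq> {}" "S \<subseteq> {1..N}" and l: "l \<in> {1..d}"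
  shows "(\<lambda>w. wavg \<omega> S (x w) l) \<in> borel_measurable M'"
  unfolding wavg_def
proof (intro borel_measurable_sum borel_measurable_times)
  fix j assume "j \<in> S"
  then have j: "j \<in> {1..N}" using S by blast
  show "(\<lambda>w. \<omega> S j (x w)) \<in> borel_measurable M'"
    by (rule measurable_compose[OF x weight_measurable[OF S j]])
  show "(\<lambda>w. x w (j, l)) \<in> borel_measurable M'"
    using measurable_config_component[OF x] j l by simp
qed

lemma cbo_step_measurable_fixed_batches:
  assumes Q: "Q \<in> batches" and e: "e \<in> measurable M' configs" and x: "x \<in> measurable M' configs"
  shows "(\<lambda>w. cbo_step N d \<gamma> \<omega> Q (e w) (x w)) \<in> measurable M' configs"
proof -
  define F where "F p w = x w p - \<gamma> * (x w p - wavg \<omega> (batch_of Q (fst p)) (x w) (snd p))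
           - (x w p - wavg \<omega> (batch_of Q (fst p)) (x w) (snd p)) * e w p" for p w
  have "(\<lambda>w. cbo_step N d \<gamma> \<omega> Q (e w) (x w)) = (\<lambda>w. \<lambda>p\<in>{1..N} \<times> {1..d}. F p w)"
    by (intro ext) (auto simp: cbo_step_def F_def mem_Times_iff)
  moreover have "(\<lambda>w. \<lambda>p\<in>{1..N} \<times> {1..d}. F p w) \<in> measurable M' configs"
    unfolding config_space_def
  proof (rule measurable_restrict)
    fix p assume p: "p \<in> {1..N} \<times> {1..d}"
    then have "fst p \<in> {1..N}" by auto
    then have "batch_of Q (fst p) \<noteq> {}" "batch_of Q (fst p) \<subseteq> {1..N}"
      using batch_of_mem(3,4)[OF Q] by blast+
    moreover have "snd p \<in> {1..d}" using p by auto
    ultimately have "(\<lambda>w. wavg \<omega> (batch_of Q (fst p)) (x w) (snd p)) \<in> borel_measurable M'"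
      by (rule wavg_measurable[OF x])
    then show "F p \<in> borel_measurable M'"
      unfolding F_def using measurable_config_component[OF x p] measurable_config_component[OF e p]
      by measurable
  qed
  ultimately show ?thesis by simp
qed

lemma cbo_step_measurable:
  assumes "Bf \<in> measurable M' (count_space batches)" "e \<in> measurable M' configs" "x \<in> measurable M' configs"
  shows "(\<lambda>w. cbo_step N d \<gamma> \<omega> (Bf w) (e w) (x w)) \<in> measurable M' configs"
  by (rule measurable_compose_countable'[OF cbo_step_measurable_fixed_batches assms(1)])
     (use assms in \<open>auto intro: countable_finite finite_admissible\<close>)

definition "traj w n = cbo_path N d \<gamma> \<omega> X0 B \<eta> w n"

lemma traj_0: "traj w 0 = X0 w"
  by (simp add: traj_def cbo_path_def)

lemma traj_Suc: "traj w (Suc n) = cbo_step N d \<gamma> \<omega> (B n w) (\<eta> n w) (traj w n)"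
  by (simp add: traj_def cbo_path_def)

definition "past n = insert SrcX0 (SrcB ` {..<n} \<union> SrcEta ` {..<n})"

lemma traj_measurable_past: "(\<lambda>w. traj w n) \<in> measurable (source_algebra (past n)) configs"
proof (induction n)
  case 0
  then show ?case by (simp add: traj_0 past_def X0_source_measurable)
next
  case (Suc n)
  have "past n \<subseteq> past (Suc n)" by (auto simp: past_def)
  then show ?case
    unfolding traj_Suc
    by (intro cbo_step_measurable measurable_source_algebra_mono[OF _ Suc.IH]
              B_source_measurable eta_source_measurable)
       (auto simp: past_def)
qed

lemma traj_measurable: "(\<lambda>w. traj w n) \<in> measurable M configs"
  by (rule measurable_from_source_algebra[OF traj_measurable_past])

lemma traj_space: "w \<in> space M \<Longrightarrow> traj w n \<in> space configs"
  using measurable_space[OF traj_measurable] by blast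

lemma B_space: "w \<in> space M \<Longrightarrow> B n w \<in> batches"
  using measurable_space[OF B_measurable] by auto

definition "diam l n w = diam_coord N (traj w n) l"

definition "noise_mass l n w = (\<Sum>i\<in>{1..N}. \<bar>\<eta> n w (i, l)\<bar>)"

lemma diam_measurable_past: "l \<in> {1..d} \<Longrightarrow> diam l n \<in> borel_measurable (source_algebra (past n))"
  unfolding diam_def[abs_def] by (rule diam_coord_measurable[OF traj_measurable_past])

lemma noise_mass_measurable: "l \<in> {1..d} \<Longrightarrow> noise_mass l n \<in> borel_measurable (source_algebra {SrcEta n})"
  unfolding noise_mass_def[abs_def]
  by (intro borel_measurable_sum borel_measurable_abs measurable_config_component[OF eta_source_measurable]) auto

lemma coord_spread_le_diam:
  assumes "i \<in> {1..N}" "j \<in> {1..N}"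
  shows "\<bar>traj w n (i, l) - traj w n (j, l)\<bar> \<le> diam l n w"
proof -
  have "traj w n (i, l) \<le> (MAX i\<in>{1..N}. traj w n (i, l))" "(MIN i\<in>{1..N}. traj w n (i, l)) \<le> traj w n (i, l)"
       "traj w n (j, l) \<le> (MAX i\<in>{1..N}. traj w n (i, l))" "(MIN i\<in>{1..N}. traj w n (i, l)) \<le> traj w n (j, l)"
    using assms by (auto intro!: Max_ge Min_le)
  then show ?thesis unfolding diam_def diam_coord_def by linarith
qed

lemma diam_nonneg: "0 \<le> diam l n w"
  using coord_spread_le_diam[OF one_in_particles one_in_particles] by simp

lemma noise_mass_nonneg: "0 \<le> noise_mass l n w"
  unfolding noise_mass_def by (simp add: sum_nonneg)

end

section \<open>Pathwise estimates\<close>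

definition covering_sequence :: "nat \<Rightarrow> nat \<Rightarrow> (nat \<Rightarrow> nat set set) \<Rightarrow> nat \<Rightarrow> bool" where
  "covering_sequence N P Pt m \<longleftrightarrow> (\<forall>k\<in>{1..m}. Pt k \<in> admissible N P) \<and>
     (\<forall>i\<in>{1..N}. \<forall>j\<in>{1..N}. \<exists>k\<in>{1..m}. \<exists>S\<in>Pt k. i \<in> S \<and> j \<in> S)"

lemma covering_property_iff: "covering_property N P m \<longleftrightarrow> (\<exists>Pt. covering_sequence N P Pt m)"
  unfolding covering_property_def covering_sequence_def ..

context rbcbo
begin

definition "batch_mean w n l i = wavg \<omega> (batch_of (B n w) i) (traj w n) l"

lemma traj_Suc_apply:
  "i \<in> {1..N} \<Longrightarrow> l \<in> {1..d} \<Longrightarrow>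
     traj w (Suc n) (i, l) = (1 - \<gamma>) * traj w n (i, l) + \<gamma> * batch_mean w n l i
       - (traj w n (i, l) - batch_mean w n l i) * \<eta> n w (i, l)"
  by (simp add: traj_Suc cbo_step_apply batch_mean_def)

lemma batch_mean_between:
  assumes w: "w \<in> space M" and i: "i \<in> {1..N}"
  shows "Min ((\<lambda>j. traj w n (j, l)) ` {1..N}) \<le> batch_mean w n l i
       \<and> batch_mean w n l i \<le> Max ((\<lambda>j. traj w n (j, l)) ` {1..N})"
proof -
  have S: "batch_of (B n w) i \<noteq> {}" "batch_of (B n w) i \<subseteq> {1..N}"
    using batch_of_mem(3,4)[OF B_space[OF w] i] by auto
  show ?thesis
    unfolding batch_mean_def
    by (rule wavg_between_min_max[OF _ _ S(2)]) (use weight_convex[OF S traj_space[OF w]] in auto)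
qed

lemma diam_eq_Max_Min: "diam l n w = Max ((\<lambda>j. traj w n (j, l)) ` {1..N}) - Min ((\<lambda>j. traj w n (j, l)) ` {1..N})"
  by (simp add: diam_def diam_coord_def)

lemma dist_batch_mean_le_diam:
  assumes w: "w \<in> space M" and i: "i \<in> {1..N}"
  shows "\<bar>traj w n (i, l) - batch_mean w n l i\<bar> \<le> diam l n w"
proof -
  have "Min ((\<lambda>j. traj w n (j, l)) ` {1..N}) \<le> traj w n (i, l)"
       "traj w n (i, l) \<le> Max ((\<lambda>j. traj w n (j, l)) ` {1..N})"
    using i by auto
  then show ?thesis using batch_mean_between[OF w i, of n l] diam_eq_Max_Min[of l n w] by linarith
qed

lemma abs_eta_le_noise_mass: "i \<in> {1..N} \<Longrightarrow> \<bar>\<eta> n w (i, l)\<bar> \<le> noise_mass l n w"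
  unfolding noise_mass_def by (rule member_le_sum) auto

lemma traj_increment_le:
  assumes w: "w \<in> space M" and i: "i \<in> {1..N}" and l: "l \<in> {1..d}"
  shows "\<bar>traj w (Suc n) (i, l) - traj w n (i, l)\<bar> \<le> (\<gamma> + noise_mass l n w) * diam l n w"
proof -
  have "traj w (Suc n) (i, l) - traj w n (i, l) = - (traj w n (i, l) - batch_mean w n l i) * (\<gamma> + \<eta> n w (i, l))"
    using traj_Suc_apply[OF i l] by (simp add: algebra_simps)
  then have "\<bar>traj w (Suc n) (i, l) - traj w n (i, l)\<bar>
      = \<bar>traj w n (i, l) - batch_mean w n l i\<bar> * \<bar>\<gamma> + \<eta> n w (i, l)\<bar>"
    by (simp add: abs_mult abs_minus_commute)
  also have "\<dots> \<le> diam l n w * (\<gamma> + noise_mass l n w)"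
    using dist_batch_mean_le_diam[OF w i] abs_eta_le_noise_mass[OF i, of n w l] gamma_pos diam_nonneg
    by (intro mult_mono) auto
  finally show ?thesis by (simp add: mult.commute)
qed

lemma perturbed_averaging_traj:
  assumes w: "w \<in> space M" and l: "l \<in> {1..d}"
  shows "perturbed_averaging {1..N} \<gamma> (\<lambda>k i. traj w (n + k) (i, l)) (\<lambda>k i. batch_mean w (n + k) l i)
     (\<lambda>k i. - (traj w (n + k) (i, l) - batch_mean w (n + k) l i) * \<eta> (n + k) w (i, l))
     (\<lambda>k. noise_mass l (n + k) w * diam l (n + k) w)"
proof
  show "finite {1..N}" "0 < \<gamma>" "\<gamma> < 1" using gamma_pos gamma_lt1 by auto
  show "{1..N} \<noteq> {}" using N_pos by auto
  fix k i assume i: "i \<in> {1..N}"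
  show "traj w (n + Suc k) (i, l) = (1 - \<gamma>) * traj w (n + k) (i, l) + \<gamma> * batch_mean w (n + k) l i
      + - (traj w (n + k) (i, l) - batch_mean w (n + k) l i) * \<eta> (n + k) w (i, l)"
    using traj_Suc_apply[OF i l, of w "n + k"] by (simp add: algebra_simps)
  show "Min ((\<lambda>i. traj w (n + k) (i, l)) ` {1..N}) \<le> batch_mean w (n + k) l i
      \<and> batch_mean w (n + k) l i \<le> Max ((\<lambda>i. traj w (n + k) (i, l)) ` {1..N})"
    by (rule batch_mean_between[OF w i])
  show "\<bar>- (traj w (n + k) (i, l) - batch_mean w (n + k) l i) * \<eta> (n + k) w (i, l)\<bar>
      \<le> noise_mass l (n + k) w * diam l (n + k) w"
  proof -
    have "\<bar>traj w (n + k) (i, l) - batch_mean w (n + k) l i\<bar> * \<bar>\<eta> (n + k) w (i, l)\<bar>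
        \<le> diam l (n + k) w * noise_mass l (n + k) w"
      using dist_batch_mean_le_diam[OF w i] abs_eta_le_noise_mass[OF i] diam_nonneg
      by (intro mult_mono) auto
    then show ?thesis by (simp add: abs_mult abs_minus_commute mult.commute)
  qed
qed

lemma diam_add_le:
  assumes w: "w \<in> space M" and l: "l \<in> {1..d}"
  shows "diam l (n + k) w \<le> diam l n w + 2 * (\<Sum>s<k. noise_mass l (n + s) w * diam l (n + s) w)"
proof -
  interpret pa: perturbed_averaging "{1..N}" \<gamma> "\<lambda>k i. traj w (n + k) (i, l)"
    "\<lambda>k i. batch_mean w (n + k) l i"
    "\<lambda>k i. - (traj w (n + k) (i, l) - batch_mean w (n + k) l i) * \<eta> (n + k) w (i, l)"
    "\<lambda>k. noise_mass l (n + k) w * diam l (n + k) w"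
    by (rule perturbed_averaging_traj[OF w l])
  show ?thesis
    using pa.diam_le[of k] unfolding pa.upper_def pa.lower_def pa.total_err_def
    unfolding diam_eq_Max_Min by simp
qed

lemma diam_Suc_le:
  "w \<in> space M \<Longrightarrow> l \<in> {1..d} \<Longrightarrow> diam l (Suc n) w \<le> diam l n w * (1 + 2 * noise_mass l n w)"
  using diam_add_le[of w l n 1] by (simp add: algebra_simps)

lemma diam_contracts_on_covering_window:
  assumes w: "w \<in> space M" and l: "l \<in> {1..d}" and cov: "covering_sequence N P Pt m"
    and follows: "\<forall>s<m. B (n + s) w = Pt (Suc s)"
  shows "diam l (n + m) w \<le> (1 - \<gamma> * (1 - \<gamma>) ^ m) * diam l n w
           + 2 * m * (\<Sum>s<m. noise_mass l (n + s) w * diam l (n + s) w)"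
proof -
  interpret pa: perturbed_averaging "{1..N}" \<gamma> "\<lambda>k i. traj w (n + k) (i, l)"
    "\<lambda>k i. batch_mean w (n + k) l i"
    "\<lambda>k i. - (traj w (n + k) (i, l) - batch_mean w (n + k) l i) * \<eta> (n + k) w (i, l)"
    "\<lambda>k. noise_mass l (n + k) w * diam l (n + k) w"
    by (rule perturbed_averaging_traj[OF w l])
  have "\<exists>s0<m. batch_mean w (n + s0) l i = batch_mean w (n + s0) l j"
    if i: "i \<in> {1..N}" and j: "j \<in> {1..N}" for i j
  proof -
    obtain k S where k: "k \<in> {1..m}" "S \<in> Pt k" "i \<in> S" "j \<in> S"
      using cov i j unfolding covering_sequence_def by blast
    have "Pt k \<in> admissible N P" using cov k(1) unfolding covering_sequence_def by blast
    moreover have "k - 1 < m" "Suc (k - 1) = k" using k(1) by auto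
    then have "B (n + (k - 1)) w = Pt k" using follows by metis
    ultimately have "batch_of (B (n + (k - 1)) w) i = batch_of (B (n + (k - 1)) w) j"
      using batch_of_eq k by metis
    then show ?thesis using k(1) by (intro exI[of _ "k - 1"]) (auto simp: batch_mean_def)
  qed
  then show ?thesis
    using pa.diam_contracts[of m] unfolding pa.upper_def pa.lower_def pa.total_err_def
    unfolding diam_eq_Max_Min by simp
qed

end

section \<open>Expected contraction of the diameter\<close>

context rbcbo
begin

lemma prob_batches_follow:
  assumes K: "finite K" and Q: "\<And>k. k \<in> K \<Longrightarrow> Q k \<in> batches"
  shows "prob {w\<in>space M. \<forall>k\<in>K. B k w = Q k} = (1 / real (card batches)) ^ card K"
proof (cases "K = {}")
  case True
  then show ?thesis by (simp add: prob_space)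
next
  case False
  define A where "A j = (case j of SrcB k \<Rightarrow> B k -` {Q k} \<inter> space M | _ \<Rightarrow> {})" for j
  have "prob (\<Inter>j\<in>SrcB ` K. A j) = (\<Prod>j\<in>SrcB ` K. prob (A j))"
  proof (rule indep_setsD[OF indep_source_events])
    show "\<forall>j\<in>SrcB ` K. A j \<in> source_events j"
      using Q by (auto simp: A_def source_events_simps)
  qed (use K False in auto)
  moreover have "(\<Inter>j\<in>SrcB ` K. A j) = {w\<in>space M. \<forall>k\<in>K. B k w = Q k}"
    using False by (auto simp: A_def)
  moreover have "(\<Prod>j\<in>SrcB ` K. prob (A j)) = (\<Prod>k\<in>K. prob {w\<in>space M. B k w = Q k})"
    by (subst prod.reindex) (auto simp: inj_on_def A_def Int_commute vimage_def intro!: prod.cong arg_cong[where f = prob])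
  ultimately show ?thesis using Q B_uniform by simp
qed

lemma expected_abs_eta_le:
  assumes z: "0 < z" "\<zeta> \<le> z" and i: "i \<in> {1..N}" and l: "l \<in> {1..d}"
  shows "(\<integral>\<^sup>+ w. ennreal \<bar>\<eta> n w (i, l)\<bar> \<partial>M) \<le> ennreal z"
proof -
  have amgm: "\<bar>x\<bar> \<le> z / 2 + (1 / (2 * z)) * x\<^sup>2" for x :: real
  proof -
    have "2 * z * \<bar>x\<bar> \<le> z\<^sup>2 + x\<^sup>2" using sum_squares_bound[of "\<bar>x\<bar>" z] by (simp add: power2_eq_square algebra_simps)
    then show ?thesis using z by (simp add: field_simps power2_eq_square)
  qed
  have m: "(\<lambda>w. \<eta> n w (i, l)) \<in> borel_measurable M"
    using measurable_config_component[OF eta_measurable] i l by simp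
  have "(\<integral>\<^sup>+ w. ennreal \<bar>\<eta> n w (i, l)\<bar> \<partial>M)
      \<le> (\<integral>\<^sup>+ w. ennreal (z / 2) + ennreal (1 / (2 * z)) * ennreal ((\<eta> n w (i, l))\<^sup>2) \<partial>M)"
    using amgm z by (intro nn_integral_mono) (simp add: ennreal_plus[symmetric] ennreal_mult'[symmetric] del: ennreal_plus)
  also have "\<dots> = ennreal (z / 2) + ennreal (1 / (2 * z)) * (\<integral>\<^sup>+ w. ennreal ((\<eta> n w (i, l))\<^sup>2) \<partial>M)"
    using m by (simp add: nn_integral_add nn_integral_cmult emeasure_space_1)
  also have "\<dots> \<le> ennreal (z / 2) + ennreal (1 / (2 * z)) * ennreal (\<zeta>\<^sup>2)"
    using eta_second_moment[OF i l] by (intro add_left_mono mult_left_mono) auto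
  also have "ennreal (1 / (2 * z)) * ennreal (\<zeta>\<^sup>2) = ennreal ((1 / (2 * z)) * \<zeta>\<^sup>2)"
    using z by (intro ennreal_mult'[symmetric]) simp
  also have "ennreal (z / 2) + \<dots> = ennreal (z / 2 + (1 / (2 * z)) * \<zeta>\<^sup>2)"
    using z by (intro ennreal_plus[symmetric]) auto
  also have "\<dots> \<le> ennreal z"
  proof (rule ennreal_leI)
    have "\<zeta>\<^sup>2 \<le> z\<^sup>2" using z zeta_nonneg by (intro power_mono) auto
    then show "z / 2 + (1 / (2 * z)) * \<zeta>\<^sup>2 \<le> z" using z by (simp add: field_simps power2_eq_square)
  qed
  finally show ?thesis .
qed

lemma expected_noise_mass_le:
  fixes z :: real
  assumes z: "0 < z" "\<zeta> \<le> z" and l: "l \<in> {1..d}"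
  shows "(\<integral>\<^sup>+ w. ennreal (noise_mass l n w) \<partial>M) \<le> ennreal (N * z)"
proof -
  have "(\<integral>\<^sup>+ w. ennreal (noise_mass l n w) \<partial>M) = (\<integral>\<^sup>+ w. (\<Sum>i\<in>{1..N}. ennreal \<bar>\<eta> n w (i, l)\<bar>) \<partial>M)"
    unfolding noise_mass_def by (simp add: sum_ennreal)
  also have "\<dots> = (\<Sum>i\<in>{1..N}. \<integral>\<^sup>+ w. ennreal \<bar>\<eta> n w (i, l)\<bar> \<partial>M)"
    using measurable_config_component[OF eta_measurable] l by (intro nn_integral_sum) auto
  also have "\<dots> \<le> (\<Sum>i\<in>{1..N}. ennreal z)"
    using expected_abs_eta_le[OF z _ l] by (intro sum_mono) auto
  also have "\<dots> = ennreal (N * z)" using z by (simp add: ennreal_mult ennreal_of_nat_eq_real_of_nat)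
  finally show ?thesis .
qed

text \<open>Expectations are weighted by a function \<open>\<phi>\<close> of the initial data, which is independent of
  batches and noise. The weight \<open>1\<close> gives the bounds in mean; the almost sure bound uses a positive
  weight making \<open>\<phi> * D\<^sub>0\<close> integrable, since the expected initial diameter may be infinite.\<close>

abbreviation "expected_diam \<phi> l n \<equiv> (\<integral>\<^sup>+ w. \<phi> w * ennreal (diam l n w) \<partial>M)"

lemma expected_diam_mult_indep:
  assumes \<phi>: "\<phi> \<in> borel_measurable (source_algebra {SrcX0})" and l: "l \<in> {1..d}"
    and g: "g \<in> borel_measurable (source_algebra K)" and K: "K \<inter> past n = {}"
  shows "(\<integral>\<^sup>+ w. (\<phi> w * ennreal (diam l n w)) * g w \<partial>M) = expected_diam \<phi> l n * (\<integral>\<^sup>+ w. g w \<partial>M)"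
proof -
  have "\<phi> \<in> borel_measurable (source_algebra (past n))"
    by (rule measurable_source_algebra_mono[OF _ \<phi>]) (auto simp: past_def)
  then have "(\<lambda>w. \<phi> w * ennreal (diam l n w)) \<in> borel_measurable (source_algebra (past n))"
    using diam_measurable_past[OF l] by measurable
  then show ?thesis using nn_integral_mult_indep_sources[of "past n" K] K g by (auto simp: Int_commute)
qed

end

locale rbcbo_covering = rbcbo +
  fixes m0 :: nat and Pt :: "nat \<Rightarrow> nat set set" and z :: real
  assumes m0_pos: "0 < m0" and covering: "covering_sequence N P Pt m0"
    and z_pos: "0 < z" and zeta_le_z: "\<zeta> \<le> z"
    and Nz_le_half: "N * z \<le> 1 / 2" and Nz_le_gamma: "N * z \<le> \<gamma>"
    and Nz_small: "2 * m0\<^sup>2 * 2 ^ m0 * N * z \<le> \<gamma> * (1 - \<gamma>) ^ m0 * (1 / real (card (admissible N P))) ^ m0 / 2"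
begin

definition "contraction = \<gamma> * (1 - \<gamma>) ^ m0"
definition "window_prob = (1 / real (card batches)) ^ m0"
definition "growth = 1 + 2 * N * z"
definition "\<rho> = 1 - contraction * window_prob / 2"

lemma covering_batches: "k \<in> {1..m0} \<Longrightarrow> Pt k \<in> batches"
  using covering unfolding covering_sequence_def by blast

lemma card_batches_pos: "0 < card batches"
  using covering_batches[of 1] m0_pos finite_admissible by (auto simp: card_gt_0_iff)

lemma contraction_pos: "0 < contraction" and contraction_le_1: "contraction \<le> 1"
proof -
  show "0 < contraction" unfolding contraction_def using gamma_pos gamma_lt1 by simp
  have "(1 - \<gamma>) ^ m0 \<le> 1" using gamma_pos gamma_lt1 by (intro power_le_one) auto
  then have "\<gamma> * (1 - \<gamma>) ^ m0 \<le> 1 * 1" using gamma_pos gamma_lt1 by (intro mult_mono) auto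
  then show "contraction \<le> 1" unfolding contraction_def by simp
qed

lemma window_prob_pos: "0 < window_prob" and window_prob_le_1: "window_prob \<le> 1"
  unfolding window_prob_def using card_batches_pos by (auto intro!: power_le_one)

lemma rho_pos: "0 < \<rho>" and rho_lt_1: "\<rho> < 1"
proof -
  have "contraction * window_prob \<le> 1 * 1"
    using contraction_le_1 window_prob_le_1 contraction_pos window_prob_pos by (intro mult_mono) auto
  moreover have "0 < contraction * window_prob" using contraction_pos window_prob_pos by simp
  ultimately show "0 < \<rho>" "\<rho> < 1" unfolding \<rho>_def by auto
qed

lemma growth_ge_1: "1 \<le> growth" and growth_le_2: "growth \<le> 2"
  unfolding growth_def using Nz_le_half z_pos by auto

lemma growth_pow_le: "s \<le> m0 \<Longrightarrow> growth ^ s \<le> 2 ^ m0"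
proof -
  assume "s \<le> m0"
  have "growth ^ s \<le> 2 ^ s" using growth_ge_1 growth_le_2 by (intro power_mono) auto
  also have "(2::real) ^ s \<le> 2 ^ m0" using \<open>s \<le> m0\<close> by (intro power_increasing) auto
  finally show ?thesis .
qed

definition "window_event n = {w\<in>space M. \<forall>s<m0. B (n + s) w = Pt (Suc s)}"

lemma window_event_source_measurable:
  "window_event n \<in> sets (source_algebra (SrcB ` {n..<n + m0}))"
proof -
  have "window_event n = {w\<in>space (source_algebra (SrcB ` {n..<n + m0})). \<forall>s\<in>{..<m0}. B (n + s) w = Pt (Suc s)}"
    unfolding window_event_def by auto
  also have "\<dots> \<in> sets (source_algebra (SrcB ` {n..<n + m0}))"
  proof (intro sets.sets_Collect_finite_All finite_lessThan)
    fix s assume s: "s \<in> {..<m0}"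
    then have "B (n + s) \<in> measurable (source_algebra (SrcB ` {n..<n + m0})) (count_space batches)"
      by (intro B_source_measurable) auto
    moreover have "{Pt (Suc s)} \<in> sets (count_space batches)" using covering_batches[of "Suc s"] s by auto
    ultimately have "B (n + s) -` {Pt (Suc s)} \<inter> space (source_algebra (SrcB ` {n..<n + m0}))
        \<in> sets (source_algebra (SrcB ` {n..<n + m0}))"
      by (rule measurable_sets)
    then show "{w\<in>space (source_algebra (SrcB ` {n..<n + m0})). B (n + s) w = Pt (Suc s)}
        \<in> sets (source_algebra (SrcB ` {n..<n + m0}))"
      by (simp add: vimage_def Int_def conj_commute)
  qed
  finally show ?thesis .
qed

lemma window_event_sets: "window_event n \<in> sets M"
  using window_event_source_measurable subalgebra_source_algebra unfolding subalgebra_def by blast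

lemma prob_window_event: "prob (window_event n) = window_prob"
proof -
  have "window_event n = {w\<in>space M. \<forall>k\<in>{n..<n + m0}. B k w = Pt (Suc (k - n))}"
  proof -
    have "(\<forall>s<m0. B (n + s) w = Pt (Suc s)) \<longleftrightarrow> (\<forall>k\<in>{n..<n + m0}. B k w = Pt (Suc (k - n)))" for w
    proof
      assume follows: "\<forall>s<m0. B (n + s) w = Pt (Suc s)"
      show "\<forall>k\<in>{n..<n + m0}. B k w = Pt (Suc (k - n))"
      proof
        fix k assume "k \<in> {n..<n + m0}"
        then have "k - n < m0" "n + (k - n) = k" by auto
        then show "B k w = Pt (Suc (k - n))" using follows by metis
      qed
    qed auto
    then show ?thesis unfolding window_event_def by blast
  qed
  also have "prob \<dots> = window_prob"
    using covering_batches unfolding window_prob_def by (subst prob_batches_follow) auto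
  finally show ?thesis .
qed

lemma expected_affine_noise_mass_le:
  assumes l: "l \<in> {1..d}" and "0 \<le> c" "0 \<le> a"
  shows "(\<integral>\<^sup>+ w. ennreal (c + a * noise_mass l n w) \<partial>M) \<le> ennreal (c + a * (N * z))"
proof -
  have m: "(\<lambda>w. ennreal (noise_mass l n w)) \<in> borel_measurable M"
    using measurable_from_source_algebra[OF noise_mass_measurable[OF l]] by simp
  have "(\<integral>\<^sup>+ w. ennreal (c + a * noise_mass l n w) \<partial>M) = (\<integral>\<^sup>+ w. ennreal c + ennreal a * ennreal (noise_mass l n w) \<partial>M)"
    using assms noise_mass_nonneg by (intro nn_integral_cong) (simp add: ennreal_plus ennreal_mult)
  also have "\<dots> = ennreal c + ennreal a * (\<integral>\<^sup>+ w. ennreal (noise_mass l n w) \<partial>M)"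
    using m by (simp add: nn_integral_add nn_integral_cmult emeasure_space_1)
  also have "\<dots> \<le> ennreal c + ennreal a * ennreal (N * z)"
    using expected_noise_mass_le[OF z_pos zeta_le_z l] by (intro add_left_mono mult_left_mono) auto
  also have "\<dots> = ennreal (c + a * (N * z))"
    using assms z_pos by (simp add: ennreal_plus ennreal_mult)
  finally show ?thesis .
qed

lemma expected_diam_Suc_le:
  assumes \<phi>: "\<phi> \<in> borel_measurable (source_algebra {SrcX0})" and l: "l \<in> {1..d}"
  shows "expected_diam \<phi> l (Suc n) \<le> expected_diam \<phi> l n * ennreal growth"
proof -
  have "expected_diam \<phi> l (Suc n)
      \<le> (\<integral>\<^sup>+ w. (\<phi> w * ennreal (diam l n w)) * ennreal (1 + 2 * noise_mass l n w) \<partial>M)"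
  proof (rule nn_integral_mono)
    fix w assume w: "w \<in> space M"
    have "ennreal (diam l (Suc n) w) \<le> ennreal (diam l n w * (1 + 2 * noise_mass l n w))"
      using diam_Suc_le[OF w l] by (rule ennreal_leI)
    also have "\<dots> = ennreal (diam l n w) * ennreal (1 + 2 * noise_mass l n w)"
      using diam_nonneg noise_mass_nonneg by (intro ennreal_mult) auto
    finally
    show "\<phi> w * ennreal (diam l (Suc n) w) \<le> (\<phi> w * ennreal (diam l n w)) * ennreal (1 + 2 * noise_mass l n w)"
      by (simp add: mult.assoc mult_left_mono)
  qed
  also have "\<dots> = expected_diam \<phi> l n * (\<integral>\<^sup>+ w. ennreal (1 + 2 * noise_mass l n w) \<partial>M)"
    using noise_mass_measurable[OF l]
    by (intro expected_diam_mult_indep[OF \<phi> l, of _ "{SrcEta n}"]) (auto simp: past_def)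
  also have "\<dots> \<le> expected_diam \<phi> l n * ennreal growth"
    using expected_affine_noise_mass_le[OF l, of 1 2 n] unfolding growth_def
    by (intro mult_left_mono) (auto simp: algebra_simps)
  finally show ?thesis .
qed

lemma expected_diam_add_le:
  assumes \<phi>: "\<phi> \<in> borel_measurable (source_algebra {SrcX0})" and l: "l \<in> {1..d}"
  shows "expected_diam \<phi> l (n + s) \<le> expected_diam \<phi> l n * ennreal (growth ^ s)"
proof (induction s)
  case (Suc s)
  have "expected_diam \<phi> l (n + Suc s) \<le> expected_diam \<phi> l (n + s) * ennreal growth"
    using expected_diam_Suc_le[OF \<phi> l, of "n + s"] by simp
  also have "\<dots> \<le> expected_diam \<phi> l n * ennreal (growth ^ s) * ennreal growth"
    using Suc.IH by (rule mult_right_mono) simp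
  also have "\<dots> = expected_diam \<phi> l n * ennreal (growth ^ Suc s)"
    using growth_ge_1 by (simp add: ennreal_mult' mult.assoc mult.commute)
  finally show ?case .
qed simp

lemma diam_window_le:
  assumes w: "w \<in> space M" and l: "l \<in> {1..d}"
  shows "diam l (n + m0) w \<le> diam l n w * (1 - contraction * indicator (window_event n) w)
           + 2 * m0 * (\<Sum>s<m0. noise_mass l (n + s) w * diam l (n + s) w)"
proof (cases "w \<in> window_event n")
  case True
  then show ?thesis
    using diam_contracts_on_covering_window[OF w l covering, of n]
    by (simp add: window_event_def contraction_def mult.commute)
next
  case False
  have "0 \<le> (\<Sum>s<m0. noise_mass l (n + s) w * diam l (n + s) w)"
    by (intro sum_nonneg mult_nonneg_nonneg noise_mass_nonneg diam_nonneg)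
  then have "2 * (\<Sum>s<m0. noise_mass l (n + s) w * diam l (n + s) w)
      \<le> 2 * m0 * (\<Sum>s<m0. noise_mass l (n + s) w * diam l (n + s) w)"
    using m0_pos by (intro mult_right_mono) auto
  then show ?thesis using diam_add_le[OF w l, of n m0] False by simp
qed

lemma expected_diam_window_split:
  assumes \<phi>: "\<phi> \<in> borel_measurable (source_algebra {SrcX0})" and l: "l \<in> {1..d}"
  shows "expected_diam \<phi> l (n + m0)
    \<le> (\<integral>\<^sup>+ w. (\<phi> w * ennreal (diam l n w)) * ennreal (1 - contraction * indicator (window_event n) w) \<partial>M)
      + (\<Sum>s<m0. ennreal (2 * m0) *
           (\<integral>\<^sup>+ w. (\<phi> w * ennreal (diam l (n + s) w)) * ennreal (noise_mass l (n + s) w) \<partial>M))"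
proof -
  let ?h = "\<lambda>w. ennreal (1 - contraction * indicator (window_event n) w)"
  let ?T = "\<lambda>s w. ennreal (2 * m0) * ((\<phi> w * ennreal (diam l (n + s) w)) * ennreal (noise_mass l (n + s) w))"
  have "expected_diam \<phi> l (n + m0) \<le> (\<integral>\<^sup>+ w. (\<phi> w * ennreal (diam l n w)) * ?h w + (\<Sum>s<m0. ?T s w) \<partial>M)"
  proof (rule nn_integral_mono)
    fix w assume w: "w \<in> space M"
    have h: "0 \<le> 1 - contraction * indicator (window_event n) w"
      using contraction_le_1 by (simp add: indicator_def)
    have "ennreal (diam l (n + m0) w) \<le> ennreal (diam l n w * (1 - contraction * indicator (window_event n) w)
          + (\<Sum>s<m0. 2 * m0 * (diam l (n + s) w * noise_mass l (n + s) w)))"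
      using diam_window_le[OF w l, of n] by (intro ennreal_leI) (simp add: sum_distrib_left mult_ac)
    also have "\<dots> = ennreal (diam l n w) * ?h w
        + (\<Sum>s<m0. ennreal (2 * m0) * (ennreal (diam l (n + s) w) * ennreal (noise_mass l (n + s) w)))"
      using h diam_nonneg noise_mass_nonneg
      by (simp add: ennreal_plus sum_nonneg sum_ennreal[symmetric] ennreal_mult del: sum_ennreal)
    finally have "\<phi> w * ennreal (diam l (n + m0) w) \<le> \<phi> w * (ennreal (diam l n w) * ?h w
        + (\<Sum>s<m0. ennreal (2 * m0) * (ennreal (diam l (n + s) w) * ennreal (noise_mass l (n + s) w))))"
      by (rule mult_left_mono) simp
    then show "\<phi> w * ennreal (diam l (n + m0) w) \<le> (\<phi> w * ennreal (diam l n w)) * ?h w + (\<Sum>s<m0. ?T s w)"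
      by (simp add: distrib_left sum_distrib_left mult_ac)
  qed
  also have "\<dots> = (\<integral>\<^sup>+ w. (\<phi> w * ennreal (diam l n w)) * ?h w \<partial>M) + (\<Sum>s<m0. \<integral>\<^sup>+ w. ?T s w \<partial>M)"
    using measurable_from_source_algebra[OF \<phi>] measurable_from_source_algebra[OF diam_measurable_past[OF l]]
      measurable_from_source_algebra[OF noise_mass_measurable[OF l]] window_event_sets
    by (simp add: nn_integral_add nn_integral_sum)
  also have "(\<Sum>s<m0. \<integral>\<^sup>+ w. ?T s w \<partial>M)
      = (\<Sum>s<m0. ennreal (2 * m0) * (\<integral>\<^sup>+ w. (\<phi> w * ennreal (diam l (n + s) w)) * ennreal (noise_mass l (n + s) w) \<partial>M))"
    using measurable_from_source_algebra[OF \<phi>] measurable_from_source_algebra[OF diam_measurable_past[OF l]]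
      measurable_from_source_algebra[OF noise_mass_measurable[OF l]]
    by (simp add: nn_integral_cmult)
  finally show ?thesis .
qed

lemma expected_window_factor:
  "(\<integral>\<^sup>+ w. ennreal (1 - contraction * indicator (window_event n) w) \<partial>M) = ennreal (1 - contraction * window_prob)"
proof -
  have "integrable M (\<lambda>w. 1 - contraction * indicator (window_event n) w)"
    using window_event_sets[of n] by (auto simp: emeasure_eq_measure)
  moreover have "AE w in M. 0 \<le> 1 - contraction * indicator (window_event n) w"
    using contraction_le_1 by (auto simp: indicator_def)
  ultimately have "(\<integral>\<^sup>+ w. ennreal (1 - contraction * indicator (window_event n) w) \<partial>M)
      = ennreal (\<integral>w. 1 - contraction * indicator (window_event n) w \<partial>M)"
    by (rule nn_integral_eq_integral)
  also have "(\<integral>w. 1 - contraction * indicator (window_event n) w \<partial>M) = 1 - contraction * prob (window_event n)"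
    using window_event_sets[of n] by (simp add: prob_space emeasure_eq_measure)
  finally show ?thesis by (simp add: prob_window_event)
qed

lemma expected_noise_term_le:
  assumes \<phi>: "\<phi> \<in> borel_measurable (source_algebra {SrcX0})" and l: "l \<in> {1..d}" and s: "s \<le> m0"
  shows "(\<integral>\<^sup>+ w. (\<phi> w * ennreal (diam l (n + s) w)) * ennreal (noise_mass l (n + s) w) \<partial>M)
    \<le> expected_diam \<phi> l n * ennreal (2 ^ m0 * (N * z))"
proof -
  have "(\<integral>\<^sup>+ w. (\<phi> w * ennreal (diam l (n + s) w)) * ennreal (noise_mass l (n + s) w) \<partial>M)
      = expected_diam \<phi> l (n + s) * (\<integral>\<^sup>+ w. ennreal (noise_mass l (n + s) w) \<partial>M)"
    using noise_mass_measurable[OF l]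
    by (intro expected_diam_mult_indep[OF \<phi> l, of _ "{SrcEta (n + s)}"]) (auto simp: past_def)
  also have "\<dots> \<le> (expected_diam \<phi> l n * ennreal (2 ^ m0)) * ennreal (N * z)"
  proof (intro mult_mono)
    show "expected_diam \<phi> l (n + s) \<le> expected_diam \<phi> l n * ennreal (2 ^ m0)"
      using expected_diam_add_le[OF \<phi> l, of n s] growth_pow_le[OF s]
      by (meson ennreal_leI mult_left_mono order_trans zero_le)
    show "(\<integral>\<^sup>+ w. ennreal (noise_mass l (n + s) w) \<partial>M) \<le> ennreal (N * z)"
      by (rule expected_noise_mass_le[OF z_pos zeta_le_z l])
  qed auto
  also have "\<dots> = expected_diam \<phi> l n * ennreal (2 ^ m0 * (N * z))"
    using z_pos by (simp add: ennreal_mult mult.assoc)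
  finally show ?thesis .
qed

lemma expected_diam_window_le:
  assumes \<phi>: "\<phi> \<in> borel_measurable (source_algebra {SrcX0})" and l: "l \<in> {1..d}"
  shows "expected_diam \<phi> l (n + m0) \<le> expected_diam \<phi> l n * ennreal \<rho>"
proof -
  let ?E = "expected_diam \<phi> l n"
  have "expected_diam \<phi> l (n + m0) \<le> ?E * ennreal (1 - contraction * window_prob)
      + (\<Sum>s<m0. ennreal (2 * m0) * (?E * ennreal (2 ^ m0 * (N * z))))"
  proof (rule order_trans[OF expected_diam_window_split[OF \<phi> l]], rule add_mono)
    have "window_event n \<in> sets (source_algebra (SrcB ` {n..<n + m0}))"
      by (rule window_event_source_measurable)
    then have "(\<lambda>w. ennreal (1 - contraction * indicator (window_event n) w))
        \<in> borel_measurable (source_algebra (SrcB ` {n..<n + m0}))"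
      by measurable
    then show "(\<integral>\<^sup>+ w. (\<phi> w * ennreal (diam l n w)) * ennreal (1 - contraction * indicator (window_event n) w) \<partial>M)
        \<le> ?E * ennreal (1 - contraction * window_prob)"
      by (subst expected_diam_mult_indep[OF \<phi> l]) (auto simp: past_def expected_window_factor)
  qed (intro sum_mono mult_left_mono expected_noise_term_le[OF \<phi> l]; simp)
  also have "(\<Sum>s<m0. ennreal (2 * m0) * (?E * ennreal (2 ^ m0 * (N * z))))
      = ?E * ennreal (2 * m0\<^sup>2 * 2 ^ m0 * N * z)"
    using z_pos by (simp add: ennreal_mult ennreal_of_nat_eq_real_of_nat power2_eq_square mult_ac)
  also have "?E * ennreal (1 - contraction * window_prob) + \<dots>
      = ?E * ennreal (1 - contraction * window_prob + 2 * m0\<^sup>2 * 2 ^ m0 * N * z)"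
  proof -
    have "contraction * window_prob \<le> 1 * 1"
      using contraction_le_1 window_prob_le_1 window_prob_pos by (intro mult_mono) auto
    then show ?thesis using z_pos by (simp add: distrib_left[symmetric] ennreal_plus)
  qed
  also have "\<dots> \<le> ?E * ennreal \<rho>"
    using Nz_small by (intro mult_left_mono ennreal_leI) (auto simp: \<rho>_def contraction_def window_prob_def)
  finally show ?thesis .
qed

lemma expected_diam_windows_le:
  assumes \<phi>: "\<phi> \<in> borel_measurable (source_algebra {SrcX0})" and l: "l \<in> {1..d}"
  shows "expected_diam \<phi> l (k * m0 + r) \<le> expected_diam \<phi> l r * ennreal (\<rho> ^ k)"
proof (induction k)
  case (Suc k)
  have "expected_diam \<phi> l (Suc k * m0 + r) = expected_diam \<phi> l ((k * m0 + r) + m0)"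
    by (simp add: algebra_simps)
  also have "\<dots> \<le> expected_diam \<phi> l (k * m0 + r) * ennreal \<rho>"
    by (rule expected_diam_window_le[OF \<phi> l])
  also have "\<dots> \<le> expected_diam \<phi> l r * ennreal (\<rho> ^ k) * ennreal \<rho>"
    using Suc.IH by (rule mult_right_mono) simp
  also have "\<dots> = expected_diam \<phi> l r * ennreal (\<rho> ^ Suc k)"
    using rho_pos by (simp add: ennreal_mult' mult.assoc mult.commute)
  finally show ?case .
qed simp

definition "\<Lambda> = - ln \<rho> / m0"
definition "decay_const = 2 ^ m0 / \<rho>"

lemma Lambda_pos: "0 < \<Lambda>"
proof -
  have "ln \<rho> < 0" using rho_pos rho_lt_1 by simp
  then show ?thesis unfolding \<Lambda>_def using m0_pos by (simp add: divide_neg_pos)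
qed

lemma decay_const_pos: "0 < decay_const"
  unfolding decay_const_def using rho_pos by simp

lemma rho_pow_div_le_exp: "2 ^ m0 * \<rho> ^ (n div m0) \<le> decay_const * exp (- \<Lambda> * n)"
proof -
  have "n = n div m0 * m0 + n mod m0" by simp
  also have "\<dots> < n div m0 * m0 + m0" using mod_less_divisor[OF m0_pos] by (rule add_strict_left_mono)
  finally have "n < (n div m0 + 1) * m0" by simp
  then have "real n < real (n div m0 + 1) * m0" by (simp only: of_nat_mult[symmetric] of_nat_less_iff)
  then have "real n / m0 \<le> real (n div m0 + 1)"
    using m0_pos by (simp add: divide_le_eq)
  then have "\<rho> ^ (n div m0 + 1) \<le> \<rho> powr (real n / m0)"
    using rho_pos rho_lt_1 by (subst powr_realpow[symmetric]) (auto intro: powr_mono')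
  also have "\<rho> powr (real n / m0) = exp (- \<Lambda> * n)"
    unfolding \<Lambda>_def powr_def using rho_pos by simp
  finally have "\<rho> ^ (n div m0) \<le> exp (- \<Lambda> * n) / \<rho>"
    using rho_pos by (simp add: field_simps)
  then have "2 ^ m0 * \<rho> ^ (n div m0) \<le> 2 ^ m0 * (exp (- \<Lambda> * n) / \<rho>)"
    by (rule mult_left_mono) simp
  then show ?thesis
    unfolding decay_const_def by simp
qed

lemma expected_diam_decay:
  assumes \<phi>: "\<phi> \<in> borel_measurable (source_algebra {SrcX0})" and l: "l \<in> {1..d}"
  shows "expected_diam \<phi> l n \<le> ennreal (decay_const * exp (- \<Lambda> * n)) * expected_diam \<phi> l 0"
proof -
  let ?q = "n div m0" and ?r = "n mod m0"
  have "expected_diam \<phi> l ?r \<le> expected_diam \<phi> l 0 * ennreal (growth ^ ?r)"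
    using expected_diam_add_le[OF \<phi> l, of 0 ?r] by simp
  also have "\<dots> \<le> expected_diam \<phi> l 0 * ennreal (2 ^ m0)"
    using growth_pow_le[of ?r] m0_pos by (intro mult_left_mono ennreal_leI) auto
  finally have "expected_diam \<phi> l ?r * ennreal (\<rho> ^ ?q) \<le> expected_diam \<phi> l 0 * ennreal (2 ^ m0) * ennreal (\<rho> ^ ?q)"
    by (rule mult_right_mono) simp
  then have "expected_diam \<phi> l n \<le> ennreal (2 ^ m0 * \<rho> ^ ?q) * expected_diam \<phi> l 0"
    using expected_diam_windows_le[OF \<phi> l, of ?q ?r] rho_pos by (simp add: ennreal_mult mult_ac)
  also have "\<dots> \<le> ennreal (decay_const * exp (- \<Lambda> * n)) * expected_diam \<phi> l 0"
    using rho_pow_div_le_exp by (intro mult_right_mono ennreal_leI) auto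
  finally show ?thesis .
qed

end

section \<open>The limit point\<close>

context rbcbo_covering
begin

definition "incr_bound l k w = (\<gamma> + noise_mass l k w) * diam l k w"

lemma incr_bound_nonneg: "0 \<le> incr_bound l k w"
  unfolding incr_bound_def using gamma_pos noise_mass_nonneg diam_nonneg by simp

lemma incr_bound_measurable: "l \<in> {1..d} \<Longrightarrow> incr_bound l k \<in> borel_measurable M"
  unfolding incr_bound_def[abs_def]
  using measurable_from_source_algebra[OF noise_mass_measurable] measurable_from_source_algebra[OF diam_measurable_past]
  by measurable

lemma expected_incr_bound_le:
  assumes \<phi>: "\<phi> \<in> borel_measurable (source_algebra {SrcX0})" and l: "l \<in> {1..d}"
  shows "(\<integral>\<^sup>+ w. \<phi> w * ennreal (incr_bound l k w) \<partial>M) \<le> ennreal (2 * \<gamma>) * expected_diam \<phi> l k"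
proof -
  have "(\<integral>\<^sup>+ w. \<phi> w * ennreal (incr_bound l k w) \<partial>M)
      = (\<integral>\<^sup>+ w. (\<phi> w * ennreal (diam l k w)) * ennreal (\<gamma> + 1 * noise_mass l k w) \<partial>M)"
    unfolding incr_bound_def using gamma_pos noise_mass_nonneg diam_nonneg
    by (intro nn_integral_cong) (simp add: ennreal_mult mult_ac)
  also have "\<dots> = expected_diam \<phi> l k * (\<integral>\<^sup>+ w. ennreal (\<gamma> + 1 * noise_mass l k w) \<partial>M)"
    using noise_mass_measurable[OF l]
    by (intro expected_diam_mult_indep[OF \<phi> l, of _ "{SrcEta k}"]) (auto simp: past_def)
  also have "\<dots> \<le> expected_diam \<phi> l k * ennreal (2 * \<gamma>)"
  proof (rule mult_left_mono)
    have "(\<integral>\<^sup>+ w. ennreal (\<gamma> + 1 * noise_mass l k w) \<partial>M) \<le> ennreal (\<gamma> + 1 * (N * z))"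
      by (rule expected_affine_noise_mass_le[OF l]) (use gamma_pos in auto)
    also have "\<dots> \<le> ennreal (2 * \<gamma>)"
      using Nz_le_gamma by (intro ennreal_leI) simp
    finally show "(\<integral>\<^sup>+ w. ennreal (\<gamma> + 1 * noise_mass l k w) \<partial>M) \<le> ennreal (2 * \<gamma>)" .
  qed simp
  finally show ?thesis by (simp add: mult.commute)
qed

lemma traj_increment_le_incr_bound:
  "w \<in> space M \<Longrightarrow> i \<in> {1..N} \<Longrightarrow> l \<in> {1..d} \<Longrightarrow>
     \<bar>traj w (Suc k) (i, l) - traj w k (i, l)\<bar> \<le> incr_bound l k w"
  unfolding incr_bound_def by (rule traj_increment_le)

definition "incr_tail l n w = (\<Sum>k. ennreal (incr_bound l (k + n) w))"

lemma incr_tail_measurable: "l \<in> {1..d} \<Longrightarrow> incr_tail l n \<in> borel_measurable M"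
  unfolding incr_tail_def[abs_def] using incr_bound_measurable by measurable

text \<open>All particles of a coordinate converge to the same point; we follow particle \<open>1\<close>. Off the
  event where the increments are summable the value is irrelevant.\<close>

definition "limit_point w l =
  (if incr_tail l 0 w < \<top> then X0 w (1, l) + (\<Sum>k. traj w (Suc k) (1, l) - traj w k (1, l)) else 0)"

lemma limit_point_measurable:
  assumes l: "l \<in> {1..d}"
  shows "(\<lambda>w. limit_point w l) \<in> borel_measurable M"
proof -
  have "(\<lambda>w. X0 w (1, l)) \<in> borel_measurable M"
    using measurable_config_component[OF X0_measurable] one_in_particles l by simp
  moreover have "(\<lambda>w. traj w (Suc k) (1, l) - traj w k (1, l)) \<in> borel_measurable M" for k
    using measurable_config_component[OF traj_measurable] one_in_particles l by simp
  ultimately show ?thesis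
    unfolding limit_point_def using incr_tail_measurable[OF l] by measurable
qed

lemma summable_incr_bound_iff: "summable (\<lambda>k. incr_bound l (k + n) w) \<longleftrightarrow> incr_tail l 0 w < \<top>"
proof -
  have "summable (\<lambda>k. incr_bound l (k + n) w) \<longleftrightarrow> summable (\<lambda>k. incr_bound l k w)"
    by (rule summable_iff_shift)
  also have "\<dots> \<longleftrightarrow> incr_tail l 0 w < \<top>"
    unfolding incr_tail_def using incr_bound_nonneg
    by (auto simp: top.not_eq_extremum[symmetric] ennreal_suminf_neq_top intro: summable_suminf_not_top)
  finally show ?thesis .
qed

lemma incr_tail_eq_suminf:
  assumes "incr_tail l 0 w < \<top>"
  shows "incr_tail l n w = ennreal (\<Sum>k. incr_bound l (k + n) w)"
  unfolding incr_tail_def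
  by (rule suminf_ennreal2[OF incr_bound_nonneg summable_incr_bound_iff[THEN iffD2, OF assms]])

lemma limit_point_dist_le:
  assumes w: "w \<in> space M" and l: "l \<in> {1..d}" and fin: "incr_tail l 0 w < \<top>"
  shows "\<bar>limit_point w l - traj w n (1, l)\<bar> \<le> (\<Sum>k. incr_bound l (k + n) w)"
proof -
  let ?dx = "\<lambda>k. traj w (Suc k) (1, l) - traj w k (1, l)"
  have dx: "\<bar>?dx k\<bar> \<le> incr_bound l k w" for k
    using traj_increment_le_incr_bound[OF w one_in_particles l] .
  have sW: "summable (\<lambda>k. incr_bound l (k + n) w)" for n
    using summable_incr_bound_iff fin by blast
  have sA: "summable (\<lambda>k. \<bar>?dx (k + n)\<bar>)" for n
    by (rule summable_comparison_test'[OF sW[of n], of 0]) (use dx in simp)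
  have sD: "summable ?dx"
    using summable_rabs_cancel[OF sA[of 0]] by simp
  have "traj w n (1, l) = X0 w (1, l) + (\<Sum>k<n. ?dx k)"
    using sum_lessThan_telescope[of "\<lambda>k. traj w k (1, l)" n] by (simp add: traj_0)
  moreover have "limit_point w l = X0 w (1, l) + ((\<Sum>k. ?dx (k + n)) + (\<Sum>k<n. ?dx k))"
    using fin suminf_split_initial_segment[OF sD, of n] unfolding limit_point_def by simp
  ultimately have "\<bar>limit_point w l - traj w n (1, l)\<bar> = \<bar>\<Sum>k. ?dx (k + n)\<bar>"
    by simp
  also have "\<dots> \<le> (\<Sum>k. \<bar>?dx (k + n)\<bar>)"
    by (rule summable_rabs[OF sA])
  also have "\<dots> \<le> (\<Sum>k. incr_bound l (k + n) w)"
    by (rule suminf_le[OF _ sA sW]) (use dx in simp)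
  finally show ?thesis .
qed

lemma dist_limit_point_le:
  assumes w: "w \<in> space M" and l: "l \<in> {1..d}" and i: "i \<in> {1..N}"
  shows "ennreal \<bar>traj w n (i, l) - limit_point w l\<bar> \<le> ennreal (diam l n w) + incr_tail l n w"
proof (cases "incr_tail l 0 w < \<top>")
  case False
  then have "\<not> summable (\<lambda>k. incr_bound l (k + n) w)"
    using summable_incr_bound_iff by blast
  then have "incr_tail l n w = \<top>"
    unfolding incr_tail_def
    using summable_suminf_not_top[of "\<lambda>k. incr_bound l (k + n) w", OF incr_bound_nonneg] by blast
  then show ?thesis by simp
next
  case True
  have "\<bar>traj w n (i, l) - limit_point w l\<bar> \<le> diam l n w + (\<Sum>k. incr_bound l (k + n) w)"
    using limit_point_dist_le[OF w l True, of n] coord_spread_le_diam[OF i one_in_particles, of w n l]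
    by linarith
  then have "ennreal \<bar>traj w n (i, l) - limit_point w l\<bar> \<le> ennreal (diam l n w + (\<Sum>k. incr_bound l (k + n) w))"
    by (rule ennreal_leI)
  also have "\<dots> = ennreal (diam l n w) + incr_tail l n w"
    using diam_nonneg incr_bound_nonneg summable_incr_bound_iff[of l n w] True
    by (simp add: ennreal_plus suminf_nonneg incr_tail_eq_suminf[OF True])
  finally show ?thesis .
qed

lemma exp_neg_Lambda_pos: "0 < exp (- \<Lambda>)" and exp_neg_Lambda_lt_1: "exp (- \<Lambda>) < 1"
  using Lambda_pos by auto

lemma exp_neg_Lambda_add: "exp (- \<Lambda> * real (k + n)) = exp (- \<Lambda> * n) * exp (- \<Lambda>) ^ k"
  by (simp add: algebra_simps exp_add[symmetric] exp_of_nat_mult[symmetric])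

lemma expected_incr_tail_le:
  assumes \<phi>: "\<phi> \<in> borel_measurable (source_algebra {SrcX0})" and l: "l \<in> {1..d}"
  shows "(\<integral>\<^sup>+ w. \<phi> w * incr_tail l n w \<partial>M)
    \<le> ennreal (2 * \<gamma> * decay_const * exp (- \<Lambda> * n) / (1 - exp (- \<Lambda>))) * expected_diam \<phi> l 0"
proof -
  let ?c = "2 * \<gamma> * decay_const * exp (- \<Lambda> * n)"
  have \<phi>M: "\<phi> \<in> borel_measurable M" by (rule measurable_from_source_algebra[OF \<phi>])
  have "(\<integral>\<^sup>+ w. \<phi> w * incr_tail l n w \<partial>M) = (\<Sum>k. \<integral>\<^sup>+ w. \<phi> w * ennreal (incr_bound l (k + n) w) \<partial>M)"
    unfolding incr_tail_def ennreal_suminf_cmult[symmetric]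
    by (rule nn_integral_suminf) (use \<phi>M incr_bound_measurable[OF l] in measurable)
  also have "\<dots> \<le> (\<Sum>k. ennreal (?c * exp (- \<Lambda>) ^ k) * expected_diam \<phi> l 0)"
  proof (rule suminf_le)
    fix k
    have "(\<integral>\<^sup>+ w. \<phi> w * ennreal (incr_bound l (k + n) w) \<partial>M) \<le> ennreal (2 * \<gamma>) * expected_diam \<phi> l (k + n)"
      by (rule expected_incr_bound_le[OF \<phi> l])
    also have "\<dots> \<le> ennreal (2 * \<gamma>) * (ennreal (decay_const * exp (- \<Lambda> * real (k + n))) * expected_diam \<phi> l 0)"
      using expected_diam_decay[OF \<phi> l, of "k + n"] by (rule mult_left_mono) simp
    also have "\<dots> = ennreal (?c * exp (- \<Lambda>) ^ k) * expected_diam \<phi> l 0"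
      using gamma_pos decay_const_pos unfolding exp_neg_Lambda_add by (simp add: ennreal_mult' mult.assoc)
    finally show "(\<integral>\<^sup>+ w. \<phi> w * ennreal (incr_bound l (k + n) w) \<partial>M) \<le> ennreal (?c * exp (- \<Lambda>) ^ k) * expected_diam \<phi> l 0" .
  qed auto
  also have "\<dots> = ennreal (?c / (1 - exp (- \<Lambda>))) * expected_diam \<phi> l 0"
  proof -
    have "(\<lambda>k. exp (- \<Lambda>) ^ k) sums (1 / (1 - exp (- \<Lambda>)))"
      using exp_neg_Lambda_lt_1 by (intro geometric_sums) simp
    then have "(\<lambda>k. ?c * exp (- \<Lambda>) ^ k) sums (?c * (1 / (1 - exp (- \<Lambda>))))"
      by (rule sums_mult)
    then have s: "(\<lambda>k. ?c * exp (- \<Lambda>) ^ k) sums (?c / (1 - exp (- \<Lambda>)))"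
      by simp
    have "(\<Sum>k. ennreal (?c * exp (- \<Lambda>) ^ k)) = ennreal (?c / (1 - exp (- \<Lambda>)))"
      using s gamma_pos decay_const_pos exp_neg_Lambda_pos by (subst suminf_ennreal2) (auto simp: sums_iff)
    then show ?thesis by (simp add: ennreal_suminf_multc)
  qed
  finally show ?thesis .
qed

definition "tail_const = decay_const * (1 + 2 * \<gamma>) / (1 - exp (- \<Lambda>))"

lemma tail_const_nonneg: "0 \<le> tail_const"
  unfolding tail_const_def using decay_const_pos gamma_pos exp_neg_Lambda_lt_1 by simp

lemma expected_diam_plus_tail_le:
  assumes \<phi>: "\<phi> \<in> borel_measurable (source_algebra {SrcX0})" and l: "l \<in> {1..d}"
  shows "(\<integral>\<^sup>+ w. \<phi> w * (ennreal (diam l n w) + incr_tail l n w) \<partial>M)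
    \<le> ennreal (tail_const * exp (- \<Lambda> * n)) * expected_diam \<phi> l 0"
proof -
  let ?E = "exp (- \<Lambda> * n)" and ?q = "exp (- \<Lambda>)"
  have "(\<integral>\<^sup>+ w. \<phi> w * (ennreal (diam l n w) + incr_tail l n w) \<partial>M)
      = expected_diam \<phi> l n + (\<integral>\<^sup>+ w. \<phi> w * incr_tail l n w \<partial>M)"
  proof -
    have m: "\<phi> \<in> borel_measurable M" "(\<lambda>w. ennreal (diam l n w)) \<in> borel_measurable M"
      "incr_tail l n \<in> borel_measurable M"
      using measurable_from_source_algebra[OF \<phi>] measurable_from_source_algebra[OF diam_measurable_past[OF l]]
        incr_tail_measurable[OF l] by simp_all
    show ?thesis
      unfolding distrib_left by (rule nn_integral_add) (use m in measurable)
  qed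
  also have "\<dots> \<le> ennreal (decay_const * ?E) * expected_diam \<phi> l 0
      + ennreal (2 * \<gamma> * decay_const * ?E / (1 - ?q)) * expected_diam \<phi> l 0"
    by (intro add_mono expected_diam_decay[OF \<phi> l] expected_incr_tail_le[OF \<phi> l])
  also have "\<dots> = (ennreal (decay_const * ?E) + ennreal (2 * \<gamma> * decay_const * ?E / (1 - ?q)))
      * expected_diam \<phi> l 0"
    by (rule distrib_right[symmetric])
  also have "\<dots> = ennreal (decay_const * ?E + 2 * \<gamma> * decay_const * ?E / (1 - ?q)) * expected_diam \<phi> l 0"
    using gamma_pos decay_const_pos exp_neg_Lambda_lt_1 by (subst ennreal_plus) auto
  also have "\<dots> \<le> ennreal (tail_const * ?E) * expected_diam \<phi> l 0"
  proof (intro mult_right_mono ennreal_leI)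
    let ?T = "2 * \<gamma> * decay_const * ?E / (1 - ?q)"
    have "decay_const * ?E \<le> decay_const * ?E / (1 - ?q)"
      using decay_const_pos exp_neg_Lambda_pos exp_neg_Lambda_lt_1 by (simp add: le_divide_eq)
    then have "decay_const * ?E + ?T \<le> decay_const * ?E / (1 - ?q) + ?T"
      by (rule add_right_mono)
    also have "\<dots> = (decay_const * ?E + 2 * \<gamma> * decay_const * ?E) / (1 - ?q)"
      by (rule add_divide_distrib[symmetric])
    also have "decay_const * ?E + 2 * \<gamma> * decay_const * ?E = decay_const * (1 + 2 * \<gamma>) * ?E"
      by (simp add: ring_distribs mult_ac)
    finally show "decay_const * ?E + ?T \<le> tail_const * ?E"
      unfolding tail_const_def by (simp only: times_divide_eq_left)
  qed simp
  finally show ?thesis .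
qed

definition "diam_const = decay_const * (1 + 2 * \<gamma>) / \<gamma>"

lemma decay_const_le_diam_const: "decay_const \<le> diam_const"
proof -
  have "decay_const * 1 \<le> decay_const * ((1 + 2 * \<gamma>) / \<gamma>)"
    using decay_const_pos gamma_pos gamma_lt1 by (intro mult_left_mono) (auto simp: field_simps)
  then show ?thesis unfolding diam_const_def by simp
qed

lemma diam_const_pos: "0 < diam_const"
  using decay_const_le_diam_const decay_const_pos by linarith

lemma tail_const_eq: "tail_const = \<gamma> * diam_const / (1 - exp (- \<Lambda>))"
  unfolding tail_const_def diam_const_def using gamma_pos by simp

lemma const_source_measurable: "(\<lambda>_. c) \<in> borel_measurable (source_algebra K)"
  by simp

lemma expected_diam_coord_bound:
  assumes l: "l \<in> {1..d}"
  shows "(\<integral>\<^sup>+ w. ennreal (diam_coord N (cbo_path N d \<gamma> \<omega> X0 B \<eta> w n) l) \<partial>M)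
    \<le> ennreal (diam_const * exp (- \<Lambda> * n)) * (\<integral>\<^sup>+ w. ennreal (diam_coord N (cbo_path N d \<gamma> \<omega> X0 B \<eta> w 0) l) \<partial>M)"
proof -
  have "expected_diam (\<lambda>_. 1) l n \<le> ennreal (decay_const * exp (- \<Lambda> * n)) * expected_diam (\<lambda>_. 1) l 0"
    by (rule expected_diam_decay[OF const_source_measurable l])
  also have "\<dots> \<le> ennreal (diam_const * exp (- \<Lambda> * n)) * expected_diam (\<lambda>_. 1) l 0"
    using decay_const_le_diam_const by (intro mult_right_mono ennreal_leI) auto
  finally show ?thesis by (simp add: diam_def traj_def)
qed

lemma dist_limit_point_le_sum:
  assumes w: "w \<in> space M" and i: "i \<in> {1..N}"
  shows "ennreal (dist1 d (traj w n) i (limit_point w))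
    \<le> (\<Sum>l\<in>{1..d}. ennreal (diam l n w) + incr_tail l n w)"
proof -
  have "ennreal (dist1 d (traj w n) i (limit_point w)) = (\<Sum>l\<in>{1..d}. ennreal \<bar>traj w n (i, l) - limit_point w l\<bar>)"
    unfolding dist1_def by (simp add: sum_ennreal)
  also have "\<dots> \<le> (\<Sum>l\<in>{1..d}. ennreal (diam l n w) + incr_tail l n w)"
    using dist_limit_point_le[OF w _ i] by (intro sum_mono) auto
  finally show ?thesis .
qed

lemma expected_dist_bound:
  assumes i: "i \<in> {1..N}"
  shows "(\<integral>\<^sup>+ w. ennreal (dist1 d (cbo_path N d \<gamma> \<omega> X0 B \<eta> w n) i (limit_point w)) \<partial>M)
    \<le> ennreal (real d * (\<gamma> + sqrt (real N) * \<zeta>) * diam_const / (1 - exp (- \<Lambda>)) * exp (- \<Lambda> * n))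
      * (MAX l\<in>{1..d}. \<integral>\<^sup>+ w. ennreal (diam_coord N (cbo_path N d \<gamma> \<omega> X0 B \<eta> w 0) l) \<partial>M)"
proof -
  let ?E = "exp (- \<Lambda> * n)" and ?D0 = "MAX l\<in>{1..d}. expected_diam (\<lambda>_. 1) l 0"
  have "(\<integral>\<^sup>+ w. ennreal (dist1 d (traj w n) i (limit_point w)) \<partial>M)
      \<le> (\<integral>\<^sup>+ w. (\<Sum>l\<in>{1..d}. ennreal (diam l n w) + incr_tail l n w) \<partial>M)"
    using dist_limit_point_le_sum[OF _ i] by (rule nn_integral_mono)
  also have "\<dots> = (\<Sum>l\<in>{1..d}. \<integral>\<^sup>+ w. 1 * (ennreal (diam l n w) + incr_tail l n w) \<partial>M)"
    using measurable_from_source_algebra[OF diam_measurable_past] incr_tail_measurable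
    by (subst nn_integral_sum) auto
  also have "\<dots> \<le> (\<Sum>l\<in>{1..d}. ennreal (tail_const * ?E) * ?D0)"
  proof (rule sum_mono)
    fix l assume l: "l \<in> {1..d}"
    have "(\<integral>\<^sup>+ w. 1 * (ennreal (diam l n w) + incr_tail l n w) \<partial>M)
        \<le> ennreal (tail_const * ?E) * expected_diam (\<lambda>_. 1) l 0"
      by (rule expected_diam_plus_tail_le[OF const_source_measurable l])
    also have "\<dots> \<le> ennreal (tail_const * ?E) * ?D0"
      using l by (intro mult_left_mono Max_ge) auto
    finally show "(\<integral>\<^sup>+ w. 1 * (ennreal (diam l n w) + incr_tail l n w) \<partial>M) \<le> ennreal (tail_const * ?E) * ?D0" .
  qed
  also have "\<dots> = ennreal (real d * (tail_const * ?E)) * ?D0"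
    using tail_const_nonneg by (simp add: ennreal_mult' ennreal_of_nat_eq_real_of_nat mult.assoc)
  also have "\<dots> \<le> ennreal (real d * (\<gamma> + sqrt (real N) * \<zeta>) * diam_const / (1 - exp (- \<Lambda>)) * ?E) * ?D0"
  proof (intro mult_right_mono ennreal_leI)
    have "tail_const \<le> (\<gamma> + sqrt (real N) * \<zeta>) * diam_const / (1 - exp (- \<Lambda>))"
      unfolding tail_const_eq using exp_neg_Lambda_lt_1 diam_const_pos zeta_nonneg
      by (intro divide_right_mono mult_right_mono) auto
    then have "real d * (tail_const * ?E) \<le> real d * ((\<gamma> + sqrt (real N) * \<zeta>) * diam_const / (1 - exp (- \<Lambda>)) * ?E)"
      by (intro mult_left_mono mult_right_mono) auto
    then show "real d * (tail_const * ?E) \<le> real d * (\<gamma> + sqrt (real N) * \<zeta>) * diam_const / (1 - exp (- \<Lambda>)) * ?E"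
      by (simp add: mult.assoc)
  qed simp
  finally show ?thesis by (simp add: diam_def traj_def)
qed

section \<open>Almost sure convergence\<close>

definition "initial_weight w = ennreal (1 / (1 + (\<Sum>l\<in>{1..d}. diam l 0 w)))"

lemma initial_weight_measurable: "initial_weight \<in> borel_measurable (source_algebra {SrcX0})"
proof -
  have "diam l 0 \<in> borel_measurable (source_algebra {SrcX0})" if "l \<in> {1..d}" for l
    using diam_measurable_past[OF that, of 0] by (simp add: past_def)
  then show ?thesis unfolding initial_weight_def[abs_def] by measurable
qed

lemma initial_weight_pos: "0 < initial_weight w"
  unfolding initial_weight_def using sum_nonneg[of "{1..d}" "\<lambda>l. diam l 0 w"] diam_nonneg
  by (simp add: ennreal_less_top)

lemma expected_diam_initial_weight_le_1: "l \<in> {1..d} \<Longrightarrow> expected_diam initial_weight l 0 \<le> 1"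
proof -
  assume l: "l \<in> {1..d}"
  have "initial_weight w * ennreal (diam l 0 w) \<le> 1" for w
  proof -
    let ?S = "\<Sum>l\<in>{1..d}. diam l 0 w"
    have "diam l 0 w \<le> ?S" using l diam_nonneg by (intro member_le_sum) auto
    moreover have "0 \<le> ?S" using diam_nonneg by (simp add: sum_nonneg)
    ultimately have "diam l 0 w / (1 + ?S) \<le> 1" by (simp add: field_simps)
    moreover have "initial_weight w * ennreal (diam l 0 w) = ennreal (diam l 0 w / (1 + ?S))"
      unfolding initial_weight_def using \<open>0 \<le> ?S\<close> diam_nonneg
      by (simp add: ennreal_mult[symmetric] del: ennreal_mult)
    ultimately show ?thesis by simp
  qed
  then have "expected_diam initial_weight l 0 \<le> (\<integral>\<^sup>+ w. 1 \<partial>M)"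
    by (intro nn_integral_mono) auto
  then show ?thesis by (simp add: emeasure_space_1)
qed

definition "dist_bound n w = (\<Sum>l\<in>{1..d}. ennreal (diam l n w) + incr_tail l n w)"

definition "weighted_dist_series w = (\<Sum>n. ennreal (exp (\<Lambda> / 2 * n)) * dist_bound n w)"

lemma dist_bound_measurable: "dist_bound n \<in> borel_measurable M"
  unfolding dist_bound_def[abs_def]
  using measurable_from_source_algebra[OF diam_measurable_past] incr_tail_measurable by measurable

lemma weighted_dist_series_measurable: "weighted_dist_series \<in> borel_measurable M"
  unfolding weighted_dist_series_def[abs_def] using dist_bound_measurable by measurable

lemma expected_weighted_dist_bound_le:
  "(\<integral>\<^sup>+ w. initial_weight w * dist_bound n w \<partial>M) \<le> ennreal (real d * tail_const * exp (- \<Lambda> * n))"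
proof -
  have "(\<integral>\<^sup>+ w. initial_weight w * dist_bound n w \<partial>M)
      = (\<Sum>l\<in>{1..d}. \<integral>\<^sup>+ w. initial_weight w * (ennreal (diam l n w) + incr_tail l n w) \<partial>M)"
    unfolding dist_bound_def sum_distrib_left
    using measurable_from_source_algebra[OF initial_weight_measurable]
      measurable_from_source_algebra[OF diam_measurable_past] incr_tail_measurable
    by (intro nn_integral_sum) auto
  also have "\<dots> \<le> (\<Sum>l\<in>{1..d}. ennreal (tail_const * exp (- \<Lambda> * n)) * 1)"
    using expected_diam_plus_tail_le[OF initial_weight_measurable] expected_diam_initial_weight_le_1
    by (intro sum_mono) (meson mult_left_mono order_trans zero_le)
  also have "\<dots> = ennreal (real d * tail_const * exp (- \<Lambda> * n))"
    using tail_const_nonneg by (simp add: ennreal_mult' ennreal_of_nat_eq_real_of_nat mult.assoc)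
  finally show ?thesis .
qed

lemma expected_weighted_dist_series_finite:
  "(\<integral>\<^sup>+ w. initial_weight w * weighted_dist_series w \<partial>M) < \<top>"
proof -
  let ?q = "exp (- \<Lambda> / 2)"
  have q: "0 < ?q" "?q < 1" using Lambda_pos by auto
  have \<phi>: "initial_weight \<in> borel_measurable M"
    by (rule measurable_from_source_algebra[OF initial_weight_measurable])
  have "(\<integral>\<^sup>+ w. initial_weight w * weighted_dist_series w \<partial>M)
      = (\<Sum>n. \<integral>\<^sup>+ w. ennreal (exp (\<Lambda> / 2 * n)) * (initial_weight w * dist_bound n w) \<partial>M)"
    unfolding weighted_dist_series_def ennreal_suminf_cmult[symmetric] mult.left_commute[of "initial_weight _"]
    by (rule nn_integral_suminf) (use \<phi> dist_bound_measurable in measurable)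
  also have "\<dots> \<le> (\<Sum>n. ennreal (real d * tail_const * ?q ^ n))"
  proof (rule suminf_le)
    fix n
    have "(\<integral>\<^sup>+ w. ennreal (exp (\<Lambda> / 2 * n)) * (initial_weight w * dist_bound n w) \<partial>M)
        = ennreal (exp (\<Lambda> / 2 * n)) * (\<integral>\<^sup>+ w. initial_weight w * dist_bound n w \<partial>M)"
      by (rule nn_integral_cmult) (use \<phi> dist_bound_measurable in measurable)
    also have "\<dots> \<le> ennreal (exp (\<Lambda> / 2 * n)) * ennreal (real d * tail_const * exp (- \<Lambda> * n))"
      by (rule mult_left_mono[OF expected_weighted_dist_bound_le]) simp
    also have "\<dots> = ennreal (real d * tail_const * ?q ^ n)"
    proof -
      have "exp (\<Lambda> / 2 * n) * exp (- \<Lambda> * n) = ?q ^ n"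
        by (simp add: exp_add[symmetric] exp_of_nat_mult[symmetric] algebra_simps)
      then show ?thesis
        using tail_const_nonneg by (simp add: ennreal_mult'[symmetric] mult_ac)
    qed
    finally show "(\<integral>\<^sup>+ w. ennreal (exp (\<Lambda> / 2 * n)) * (initial_weight w * dist_bound n w) \<partial>M)
        \<le> ennreal (real d * tail_const * ?q ^ n)" .
  qed auto
  also have "\<dots> < \<top>"
  proof -
    have "summable (\<lambda>n. real d * tail_const * ?q ^ n)"
      using q by (intro summable_mult summable_geometric) auto
    then show ?thesis
      using tail_const_nonneg q by (simp add: ennreal_suminf_neq_top top.not_eq_extremum)
  qed
  finally show ?thesis .
qed

lemma AE_weighted_dist_series_finite: "AE w in M. weighted_dist_series w \<noteq> \<top>"
proof -
  have "AE w in M. initial_weight w * weighted_dist_series w \<noteq> \<infinity>"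
  proof (rule nn_integral_PInf_AE)
    show "(\<lambda>w. initial_weight w * weighted_dist_series w) \<in> borel_measurable M"
      using measurable_from_source_algebra[OF initial_weight_measurable] weighted_dist_series_measurable
      by measurable
  qed (use expected_weighted_dist_series_finite in auto)
  then show ?thesis
  proof (rule AE_mp, intro AE_I2 impI)
    fix w assume "initial_weight w * weighted_dist_series w \<noteq> \<infinity>"
    then show "weighted_dist_series w \<noteq> \<top>"
      using initial_weight_pos[of w] by (auto simp: ennreal_mult_eq_top_iff)
  qed
qed

definition "random_const w = enn2real (weighted_dist_series w) + 1"

lemma random_const_measurable: "random_const \<in> borel_measurable M"
  unfolding random_const_def[abs_def] using weighted_dist_series_measurable by measurable

lemma random_const_pos: "0 < random_const w"
  unfolding random_const_def by (simp add: add_nonneg_pos)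

lemma dist_limit_point_le_random_const:
  assumes w: "w \<in> space M" and fin: "weighted_dist_series w \<noteq> \<top>" and i: "i \<in> {1..N}"
  shows "dist1 d (traj w n) i (limit_point w) \<le> random_const w * exp (- (\<Lambda> / 2) * n)"
proof -
  have "ennreal (exp (\<Lambda> / 2 * n)) * dist_bound n w \<le> weighted_dist_series w"
    unfolding weighted_dist_series_def
    using sum_le_suminf[of "\<lambda>n. ennreal (exp (\<Lambda> / 2 * n)) * dist_bound n w" "{n}"] by auto
  then have "ennreal (exp (- (\<Lambda> / 2) * n)) * (ennreal (exp (\<Lambda> / 2 * n)) * dist_bound n w)
      \<le> ennreal (exp (- (\<Lambda> / 2) * n)) * weighted_dist_series w"
    by (rule mult_left_mono) simp
  moreover have "ennreal (exp (- (\<Lambda> / 2) * n)) * ennreal (exp (\<Lambda> / 2 * n)) = 1"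
    by (simp add: ennreal_mult[symmetric] exp_add[symmetric] del: ennreal_mult)
  ultimately have "dist_bound n w \<le> ennreal (exp (- (\<Lambda> / 2) * n)) * weighted_dist_series w"
    by (simp add: mult.assoc[symmetric])
  also have "weighted_dist_series w = ennreal (enn2real (weighted_dist_series w))"
    using fin by (simp add: top.not_eq_extremum)
  finally have "ennreal (dist1 d (traj w n) i (limit_point w))
      \<le> ennreal (exp (- (\<Lambda> / 2) * n) * enn2real (weighted_dist_series w))"
    using dist_limit_point_le_sum[OF w i, of n] unfolding dist_bound_def by (simp add: ennreal_mult)
  then have "dist1 d (traj w n) i (limit_point w) \<le> exp (- (\<Lambda> / 2) * n) * enn2real (weighted_dist_series w)"
    by (subst (asm) ennreal_le_iff) auto
  also have "\<dots> \<le> exp (- (\<Lambda> / 2) * n) * random_const w"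
    unfolding random_const_def by (intro mult_left_mono) auto
  finally show ?thesis by (simp add: mult.commute)
qed

lemma rbcbo_convergence:
  "let X = cbo_path N d \<gamma> \<omega> X0 B \<eta> in
      \<exists>xinf :: 'a \<Rightarrow> nat \<Rightarrow> real.
        (\<forall>l\<in>{1..d}. (\<lambda>w. xinf w l) \<in> borel_measurable M)
      \<and> (\<exists>C1 > 0. \<exists>\<Lambda>1 > 0.
          (\<forall>n. \<forall>l\<in>{1..d}.
             (\<integral>\<^sup>+ w. ennreal (diam_coord N (X w n) l) \<partial>M)
               \<le> ennreal (C1 * exp (- \<Lambda>1 * real n)) * (\<integral>\<^sup>+ w. ennreal (diam_coord N (X w 0) l) \<partial>M))
        \<and> (\<forall>n. \<forall>i\<in>{1..N}.
             (\<integral>\<^sup>+ w. ennreal (dist1 d (X w n) i (xinf w)) \<partial>M)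
               \<le> ennreal (real d * (\<gamma> + sqrt (real N) * \<zeta>) * C1 / (1 - exp (- \<Lambda>1))
                          * exp (- \<Lambda>1 * real n))
                 * (MAX l\<in>{1..d}. \<integral>\<^sup>+ w. ennreal (diam_coord N (X w 0) l) \<partial>M)))
      \<and> (\<exists>\<Lambda>2 > 0. \<exists>C3 :: 'a \<Rightarrow> real.
          C3 \<in> borel_measurable M \<and> (\<forall>w\<in>space M. C3 w > 0)
        \<and> (AE w in M. \<forall>n. \<forall>i\<in>{1..N}.
             dist1 d (X w n) i (xinf w) \<le> C3 w * exp (- \<Lambda>2 * real n)))"
  unfolding Let_def
proof (intro exI[of _ limit_point] conjI)
  show "\<forall>l\<in>{1..d}. (\<lambda>w. limit_point w l) \<in> borel_measurable M"
    using limit_point_measurable by blast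
  show "\<exists>C1>0. \<exists>\<Lambda>1>0.
      (\<forall>n. \<forall>l\<in>{1..d}. (\<integral>\<^sup>+ w. ennreal (diam_coord N (cbo_path N d \<gamma> \<omega> X0 B \<eta> w n) l) \<partial>M)
         \<le> ennreal (C1 * exp (- \<Lambda>1 * real n)) * (\<integral>\<^sup>+ w. ennreal (diam_coord N (cbo_path N d \<gamma> \<omega> X0 B \<eta> w 0) l) \<partial>M))
    \<and> (\<forall>n. \<forall>i\<in>{1..N}. (\<integral>\<^sup>+ w. ennreal (dist1 d (cbo_path N d \<gamma> \<omega> X0 B \<eta> w n) i (limit_point w)) \<partial>M)
         \<le> ennreal (real d * (\<gamma> + sqrt (real N) * \<zeta>) * C1 / (1 - exp (- \<Lambda>1)) * exp (- \<Lambda>1 * real n))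
           * (MAX l\<in>{1..d}. \<integral>\<^sup>+ w. ennreal (diam_coord N (cbo_path N d \<gamma> \<omega> X0 B \<eta> w 0) l) \<partial>M))"
    by (rule exI[of _ diam_const], rule conjI[OF diam_const_pos], rule exI[of _ \<Lambda>])
       (intro conjI Lambda_pos allI ballI expected_diam_coord_bound expected_dist_bound)
  have "AE w in M. \<forall>n. \<forall>i\<in>{1..N}.
      dist1 d (cbo_path N d \<gamma> \<omega> X0 B \<eta> w n) i (limit_point w) \<le> random_const w * exp (- (\<Lambda> / 2) * real n)"
    using AE_weighted_dist_series_finite
  proof (rule AE_mp, intro AE_I2 impI allI ballI)
    fix w n i assume "w \<in> space M" "weighted_dist_series w \<noteq> \<top>" "i \<in> {1..N}"
    then show "dist1 d (cbo_path N d \<gamma> \<omega> X0 B \<eta> w n) i (limit_point w) \<le> random_const w * exp (- (\<Lambda> / 2) * real n)"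
      using dist_limit_point_le_random_const unfolding traj_def by blast
  qed
  then show "\<exists>\<Lambda>2>0. \<exists>C3. C3 \<in> borel_measurable M \<and> (\<forall>w\<in>space M. 0 < C3 w)
    \<and> (AE w in M. \<forall>n. \<forall>i\<in>{1..N}.
         dist1 d (cbo_path N d \<gamma> \<omega> X0 B \<eta> w n) i (limit_point w) \<le> C3 w * exp (- \<Lambda>2 * real n))"
    using Lambda_pos random_const_measurable random_const_pos by (intro exI[of _ "\<Lambda> / 2"] exI[of _ random_const]) auto
qed

end

lemma noise_threshold_exists:
  fixes N m0 :: nat and \<gamma> p :: real
  assumes "0 < N" "0 < \<gamma>" "\<gamma> < 1" "0 < p"
  shows "\<exists>z::real. 0 < z \<and> N * z \<le> 1 / 2 \<and> N * z \<le> \<gamma> \<and> 2 * m0\<^sup>2 * 2 ^ m0 * N * z \<le> \<gamma> * (1 - \<gamma>) ^ m0 * p / 2"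
proof -
  have small: "\<forall>\<^sub>F z in at_right (0::real). c * z < b" if "0 < b" for b c :: real
  proof (rule order_tendstoD(2)[OF _ that])
    show "((\<lambda>z. c * z) \<longlongrightarrow> 0) (at_right 0)"
      by (rule tendsto_mult_right_zero[OF tendsto_ident_at])
  qed
  have "0 < \<gamma> * (1 - \<gamma>) ^ m0 * p / 2" using assms by simp
  then have "\<forall>\<^sub>F z in at_right (0::real). 0 < z \<and> N * z < 1 / 2 \<and> N * z < \<gamma>
      \<and> (2 * m0\<^sup>2 * 2 ^ m0 * N) * z < \<gamma> * (1 - \<gamma>) ^ m0 * p / 2"
    using assms(2) by (intro eventually_conj eventually_at_right_less small) simp_all
  then obtain z :: real where "0 < z" "N * z < 1 / 2" "N * z < \<gamma>"
      "(2 * m0\<^sup>2 * 2 ^ m0 * N) * z < \<gamma> * (1 - \<gamma>) ^ m0 * p / 2"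
    using eventually_happens'[OF trivial_limit_at_right_real] by blast
  then show ?thesis by (intro exI[of _ z]) auto
qed


theorem theorem5p1:
  fixes N P m0 :: nat and \<gamma> :: real
  assumes "N \<ge> 2" and "P \<ge> 2" and "0 < \<gamma>" and "\<gamma> < 1"
    and "m0 > 0" and "covering_property N P m0"
  shows "\<exists>\<zeta>3 > 0. \<forall>(d::nat) (\<zeta>::real) (M::'a measure) \<omega> X0 B \<eta>.
     d \<ge> 1 \<and> 0 \<le> \<zeta> \<and> \<zeta> < \<zeta>3 \<and> rbcbo_setting N d P \<zeta> M \<omega> X0 B \<eta> \<longrightarrow>
     (let X = cbo_path N d \<gamma> \<omega> X0 B \<eta> in
      \<exists>xinf :: 'a \<Rightarrow> nat \<Rightarrow> real.
        (\<forall>l\<in>{1..d}. (\<lambda>w. xinf w l) \<in> borel_measurable M)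
      \<comment> \<open>(1)\<close>
      \<and> (\<exists>C1 > 0. \<exists>\<Lambda>1 > 0.
          (\<forall>n. \<forall>l\<in>{1..d}.
             (\<integral>\<^sup>+ w. ennreal (diam_coord N (X w n) l) \<partial>M)
               \<le> ennreal (C1 * exp (- \<Lambda>1 * real n)) * (\<integral>\<^sup>+ w. ennreal (diam_coord N (X w 0) l) \<partial>M))
        \<and> (\<forall>n. \<forall>i\<in>{1..N}.
             (\<integral>\<^sup>+ w. ennreal (dist1 d (X w n) i (xinf w)) \<partial>M)
               \<le> ennreal (real d * (\<gamma> + sqrt (real N) * \<zeta>) * C1 / (1 - exp (- \<Lambda>1))
                          * exp (- \<Lambda>1 * real n))
                 * (MAX l\<in>{1..d}. \<integral>\<^sup>+ w. ennreal (diam_coord N (X w 0) l) \<partial>M)))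
      \<comment> \<open>(2)\<close>
      \<and> (\<exists>\<Lambda>2 > 0. \<exists>C3 :: 'a \<Rightarrow> real.
          C3 \<in> borel_measurable M \<and> (\<forall>w\<in>space M. C3 w > 0)
        \<and> (AE w in M. \<forall>n. \<forall>i\<in>{1..N}.
             dist1 d (X w n) i (xinf w) \<le> C3 w * exp (- \<Lambda>2 * real n))))"
proof -
  obtain Pt where Pt: "covering_sequence N P Pt m0"
    using assms(6) covering_property_iff by blast
  then have "Pt 1 \<in> admissible N P"
    using assms(5) unfolding covering_sequence_def by auto
  then have "0 < card (admissible N P)"
    using finite_admissible card_gt_0_iff by blast
  then obtain z :: real where z: "0 < z" "N * z \<le> 1 / 2" "N * z \<le> \<gamma>"
      "2 * m0\<^sup>2 * 2 ^ m0 * N * z \<le> \<gamma> * (1 - \<gamma>) ^ m0 * (1 / real (card (admissible N P))) ^ m0 / 2"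
    using noise_threshold_exists[of N \<gamma> "(1 / real (card (admissible N P))) ^ m0" m0] assms by fastforce
  have covering_instance: "rbcbo_covering M N d P \<gamma> \<zeta> \<omega> X0 B \<eta> m0 Pt z"
    if "d \<ge> 1 \<and> 0 \<le> \<zeta> \<and> \<zeta> < z \<and> rbcbo_setting N d P \<zeta> M \<omega> X0 B \<eta>"
    for d \<zeta> and M :: "'a measure" and \<omega> X0 B \<eta>
  proof (intro rbcbo_covering.intro rbcbo.intro rbcbo_axioms.intro rbcbo_covering_axioms.intro)
    show "prob_space M" using that unfolding rbcbo_setting_def by blast
  qed (use that assms Pt z in auto)
  show ?thesis
    by (intro exI[of _ z] conjI z(1) allI impI rbcbo_covering.rbcbo_convergence[OF covering_instance]) auto
qed

end
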